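(* Let $l\ge1$ be an integer and $(a_0,\dots,a_{l-1})\in\mathbb{R}^l$, and consider the planar system given in polar coordinates $(\rho,\varphi)$ by $$\dot\rho=-\rho\left(\rho^{-2l}+\sum_{j=0}^{l-1}a_j\rho^{-2j}\right),\qquad\dot\varphi=1.$$ Suppose this system has a limit cycle $\rho=\rho_0$ ($\rho_0>0$) of multiplicity $m$, $1\le m\le l$. Let $\Gamma_1$ and $\Gamma_2$ be parts of two trajectories of the system near the limit cycle, from outside and from inside respectively. Then $\Gamma_1$ and $\Gamma_2$ are comparable (a) with exponential spirals $\rho=\rho_0\pm e^{-\beta\varphi}$ of limit cycle type when $m=1$, for some constant $\beta\neq0$ depending only on $a_0,\dots,a_{l-1}$; (b) with power spirals $\rho=\rho_0\pm\varphi^{-1/(m-1)}$ when $m>1$. In both cases $\dim_B\Gamma_i=2-\frac1m$ for $i=1,2$.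
   Context: The multiplicity of the limit cycle $\rho=\rho_0$ is the multiplicity of $\rho_0$ as a zero of the function $\rho\mapsto\rho^{-2l}+\sum_{j=0}^{l-1}a_j\rho^{-2j}$. A spiral $\rho=F(\varphi)$ near the circle $\rho=\rho_0$ is comparable with $\rho=\rho_0\pm G(\varphi)$ if there are constants $c_1,c_2>0$ with $c_1G(\varphi)\le|F(\varphi)-\rho_0|\le c_2G(\varphi)$ for all $\varphi$ in the end of the range of angles along which the spiral accumulates on the circle. For a nonempty bounded $B\subset\mathbb{R}^2$, with $B_\varepsilon$ its $\varepsilon$-neighbourhood and $|B_\varepsilon|$ its area, $\overline{\dim}_BB=\inf\{s:\limsup_{\varepsilon\to0}|B_\varepsilon|/\varepsilon^{2-s}=0\}$, $\underline{\dim}_BB$ is the same with $\liminf$, and $\dim_BB$ is their common value. *)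

theory Defs
  imports "HOL-Analysis.Analysis"
begin

definition cyc_fun :: "nat \<Rightarrow> (nat \<Rightarrow> real) \<Rightarrow> real \<Rightarrow> real" where
  "cyc_fun l a \<rho> = inverse (\<rho> ^ (2*l)) + (\<Sum>j<l. a j * inverse (\<rho> ^ (2*j)))"

definition zero_multiplicity :: "(real \<Rightarrow> real) \<Rightarrow> real \<Rightarrow> nat \<Rightarrow> bool" where
  "zero_multiplicity g x m \<longleftrightarrow>
     (\<forall>k<m. (deriv ^^ k) g x = 0) \<and> (deriv ^^ m) g x \<noteq> 0"

text \<open>A part of a trajectory of the system written as a spiral rho = F(phi), phi in T,
  where T is a half-line on whose end (filter L) the spiral accumulates on the circle rho = rho0.\<close>
definition traj_tail ::
  "nat \<Rightarrow> (nat \<Rightarrow> real) \<Rightarrow> real \<Rightarrow> (real \<Rightarrow> real) \<Rightarrow> real set \<Rightarrow> real filter \<Rightarrow> bool" where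
  "traj_tail l a \<rho>0 F T L \<longleftrightarrow>
     (\<exists>\<phi>1. (T = {\<phi>1..} \<and> L = at_top) \<or> (T = {..\<phi>1} \<and> L = at_bot)) \<and>
     (\<forall>\<phi>\<in>T. F \<phi> > 0 \<and> F \<phi> \<noteq> \<rho>0 \<and>
        (F has_real_derivative (- F \<phi> * cyc_fun l a (F \<phi>))) (at \<phi> within T)) \<and>
     (F \<longlongrightarrow> \<rho>0) L"

definition spiral_set :: "(real \<Rightarrow> real) \<Rightarrow> real set \<Rightarrow> (real \<times> real) set" where
  "spiral_set F T = (\<lambda>\<phi>. (F \<phi> * cos \<phi>, F \<phi> * sin \<phi>)) ` T"

definition comparable :: "(real \<Rightarrow> real) \<Rightarrow> real \<Rightarrow> (real \<Rightarrow> real) \<Rightarrow> real filter \<Rightarrow> bool" where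
  "comparable F \<rho>0 G L \<longleftrightarrow>
     (\<exists>c1>0. \<exists>c2>0. \<forall>\<^sub>F \<phi> in L. c1 * G \<phi> \<le> \<bar>F \<phi> - \<rho>0\<bar> \<and> \<bar>F \<phi> - \<rho>0\<bar> \<le> c2 * G \<phi>)"

definition eps_nbhd :: "(real \<times> real) set \<Rightarrow> real \<Rightarrow> (real \<times> real) set" where
  "eps_nbhd B \<epsilon> = (\<Union>b\<in>B. ball b \<epsilon>)"

definition upper_box_dim :: "(real \<times> real) set \<Rightarrow> real" where
  "upper_box_dim B = Inf {s. Limsup (at_right 0)
      (\<lambda>\<epsilon>. ereal (measure lborel (eps_nbhd B \<epsilon>) / \<epsilon> powr (2 - s))) = 0}"

definition lower_box_dim :: "(real \<times> real) set \<Rightarrow> real" where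
  "lower_box_dim B = Inf {s. Liminf (at_right 0)
      (\<lambda>\<epsilon>. ereal (measure lborel (eps_nbhd B \<epsilon>) / \<epsilon> powr (2 - s))) = 0}"

definition has_box_dim :: "(real \<times> real) set \<Rightarrow> real \<Rightarrow> bool" where
  "has_box_dim B d \<longleftrightarrow> lower_box_dim B = d \<and> upper_box_dim B = d"

end

theory Submission
  imports Defs
begin

text \<open>Let \<open>dev\<close> be the distance of the spiral from the cycle as a function of the angle. Near
  \<open>\<rho>0\<close> the right-hand side is \<open>\<kappa> (\<rho> - \<rho>0)^m\<close> with \<open>\<kappa>\<close> bounded away from \<open>0\<close>, so
  \<open>- dev' \<asymp> dev^m\<close>. For \<open>m > 1\<close> integration gives \<open>dev powr (1 - m) \<asymp> \<phi>\<close>. For \<open>m = 1\<close> the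
  logarithmic derivative of \<open>dev\<close> is \<open>- \<beta> + O(dev)\<close> with \<open>\<beta> = \<plusminus>\<rho>0 f'(\<rho>0)\<close>; since \<open>dev\<close>
  decays exponentially the error integrates to a bounded quantity, so \<open>dev \<asymp> exp (- \<beta> \<phi>)\<close>.

  For the box dimension, consider the first angle at which \<open>dev \<approx> \<epsilon> powr (1 / m)\<close>. From there on
  consecutive turns are less than \<open>\<epsilon>\<close> apart (the drop per turn is \<open>O(dev^m)\<close>), so the
  \<open>\<epsilon>\<close>-neighbourhood contains a one-sided annulus of width \<open>\<asymp> \<epsilon> powr (1 / m)\<close>. Conversely it is
  covered by an annulus of that width together with \<open>\<epsilon>\<close>-balls along the earlier arc, whose length
  is \<open>O(\<epsilon> powr (1 / m - 1 - a))\<close> for every \<open>a > 0\<close>. Thus the area is \<open>\<epsilon> powr (1 / m)\<close> up to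
  factors \<open>\<epsilon> powr (\<plusminus>a)\<close>, and both box dimensions equal \<open>2 - 1 / m\<close>.\<close>

section \<open>Smoothness of the right-hand side\<close>

definition powr_sum :: "(real \<times> real) list \<Rightarrow> real \<Rightarrow> real" where
  "powr_sum cs x = (\<Sum>(c, e)\<leftarrow>cs. c * x powr e)"

definition powr_sum_diff :: "(real \<times> real) list \<Rightarrow> (real \<times> real) list" where
  "powr_sum_diff cs = map (\<lambda>(c, e). (c * e, e - 1)) cs"

lemma powr_sum_has_derivative:
  "x > 0 \<Longrightarrow> (powr_sum cs has_real_derivative powr_sum (powr_sum_diff cs) x) (at x)"
proof (induction cs)
  case Nil
  then show ?case by (simp add: powr_sum_def powr_sum_diff_def)
next
  case (Cons p cs)
  obtain c e where p: "p = (c, e)" by fastforce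
  have "powr_sum (p # cs) = (\<lambda>x. c * x powr e + powr_sum cs x)"
    by (auto simp: powr_sum_def p)
  moreover have "powr_sum (powr_sum_diff (p # cs)) x
      = c * (e * x powr (e - 1)) + powr_sum (powr_sum_diff cs) x"
    by (simp add: powr_sum_def powr_sum_diff_def p)
  ultimately show ?case
    by (simp only:) (intro DERIV_add DERIV_cmult has_real_derivative_powr Cons.IH Cons.prems)
qed

lemma cyc_fun_eq_powr_sum:
  assumes "x > 0"
  shows "cyc_fun l a x = powr_sum ((1, - (2 * real l)) # map (\<lambda>j. (a j, - (2 * real j))) [0..<l]) x"
proof -
  have "inverse (x ^ k) = x powr (- real k)" for k
    using assms by (simp add: powr_minus powr_realpow)
  from this[of "2 * _"] show ?thesis
    unfolding cyc_fun_def powr_sum_def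
    by (simp add: atLeast0LessThan o_def interv_sum_list_conv_sum_set_nat)
qed

lemma higher_deriv_cyc_fun:
  fixes l a
  defines "cs \<equiv> (1, - (2 * real l)) # map (\<lambda>j. (a j, - (2 * real j))) [0..<l]"
  assumes "x > 0"
  shows "(deriv ^^ k) (cyc_fun l a) x = powr_sum ((powr_sum_diff ^^ k) cs) x"
  using assms(2)
proof (induction k arbitrary: x)
  case 0
  then show ?case using cyc_fun_eq_powr_sum[of x l a] by (simp add: cs_def)
next
  case (Suc k)
  have "\<forall>\<^sub>F y in nhds x. (deriv ^^ k) (cyc_fun l a) y = powr_sum ((powr_sum_diff ^^ k) cs) y"
    using eventually_nhds_in_open[of "{0<..}" x] Suc by (auto elim!: eventually_mono)
  then have "deriv ((deriv ^^ k) (cyc_fun l a)) x = deriv (powr_sum ((powr_sum_diff ^^ k) cs)) x"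
    by (rule deriv_cong_ev) simp
  also have "\<dots> = powr_sum (powr_sum_diff ((powr_sum_diff ^^ k) cs)) x"
    by (rule DERIV_imp_deriv, rule powr_sum_has_derivative, fact)
  finally show ?case by simp
qed

lemma higher_deriv_cyc_fun_has_derivative:
  assumes "x > 0"
  shows "((deriv ^^ k) (cyc_fun l a) has_real_derivative (deriv ^^ Suc k) (cyc_fun l a) x) (at x)"
proof -
  define cs where "cs \<equiv> (1, - (2 * real l)) # map (\<lambda>j. (a j, - (2 * real j))) [0..<l]"
  have "(powr_sum ((powr_sum_diff ^^ k) cs) has_real_derivative
      powr_sum ((powr_sum_diff ^^ Suc k) cs) x) (at x)"
    using powr_sum_has_derivative[OF assms] by simp
  then have "((deriv ^^ k) (cyc_fun l a) has_real_derivative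
      powr_sum ((powr_sum_diff ^^ Suc k) cs) x) (at x)"
    by (rule has_field_derivative_transform_within_open[where S="{0<..}"])
       (use assms higher_deriv_cyc_fun[where l=l and a=a and k=k] in \<open>auto simp: cs_def\<close>)
  then show ?thesis
    using higher_deriv_cyc_fun[OF assms, where l=l and a=a and k="Suc k"] by (simp add: cs_def)
qed

section \<open>Local behaviour at a zero of finite order\<close>

lemma Taylor_at_zero_of_order:
  fixes f :: "real \<Rightarrow> real"
  assumes smooth: "\<And>k t. t > 0 \<Longrightarrow> ((deriv ^^ k) f has_real_derivative (deriv ^^ Suc k) f t) (at t)"
    and vanish: "\<forall>k<n. (deriv ^^ k) f \<rho>0 = 0" and "n > 0"
    and "\<rho>0 > 0" "x > 0" "x \<noteq> \<rho>0"
  obtains t where "t > 0" "\<bar>t - \<rho>0\<bar> \<le> \<bar>x - \<rho>0\<bar>" "f x = (deriv ^^ n) f t / fact n * (x - \<rho>0) ^ n"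
proof -
  have "\<exists>t. (if x < \<rho>0 then x < t \<and> t < \<rho>0 else \<rho>0 < t \<and> t < x) \<and>
    f x = (\<Sum>m<n. (deriv ^^ m) f \<rho>0 / fact m * (x - \<rho>0) ^ m) + (deriv ^^ n) f t / fact n * (x - \<rho>0) ^ n"
    by (rule Taylor[where a="min x \<rho>0" and b="max x \<rho>0"])
       (use assms in \<open>auto intro!: smooth simp del: funpow.simps\<close>)
  then obtain t where t: "if x < \<rho>0 then x < t \<and> t < \<rho>0 else \<rho>0 < t \<and> t < x"
    "f x = (\<Sum>m<n. (deriv ^^ m) f \<rho>0 / fact m * (x - \<rho>0) ^ m) + (deriv ^^ n) f t / fact n * (x - \<rho>0) ^ n"
    by blast
  have "t > 0" "\<bar>t - \<rho>0\<bar> \<le> \<bar>x - \<rho>0\<bar>"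
    using t(1) assms by (auto split: if_splits)
  moreover have "f x = (deriv ^^ n) f t / fact n * (x - \<rho>0) ^ n"
    using t(2) vanish by simp
  ultimately show ?thesis by (rule that)
qed

lemma zero_of_order_factor:
  fixes f :: "real \<Rightarrow> real" and m :: nat and \<rho>0 :: real
  defines "D \<equiv> (deriv ^^ m) f \<rho>0"
  assumes smooth: "\<And>k t. t > 0 \<Longrightarrow> ((deriv ^^ k) f has_real_derivative (deriv ^^ Suc k) f t) (at t)"
    and vanish: "\<forall>k<m. (deriv ^^ k) f \<rho>0 = 0" and m: "m > 0" and "D \<noteq> 0" and r0: "\<rho>0 > 0"
  shows "\<exists>\<delta>>0. \<forall>x. \<bar>x - \<rho>0\<bar> \<le> \<delta> \<longrightarrow> (\<exists>\<kappa>. f x = \<kappa> * (x - \<rho>0) ^ m \<and>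
      \<bar>D\<bar> / (2 * fact m) \<le> sgn D * \<kappa> \<and> sgn D * \<kappa> \<le> 3 * \<bar>D\<bar> / (2 * fact m))"
proof -
  have "isCont ((deriv ^^ m) f) \<rho>0"
    using smooth[OF r0] DERIV_isCont by blast
  then obtain e where e: "e > 0" and close: "\<And>t. \<bar>t - \<rho>0\<bar> < e \<Longrightarrow> \<bar>(deriv ^^ m) f t - D\<bar> < \<bar>D\<bar> / 2"
    using \<open>D \<noteq> 0\<close> unfolding continuous_at_eps_delta dist_real_def D_def
    by (metis zero_less_abs_iff half_gt_zero_iff)
  have sgnD: "sgn D * sgn D = 1" "sgn D * D = \<bar>D\<bar>" "\<bar>sgn D\<bar> = 1"
    using \<open>D \<noteq> 0\<close> by (auto simp: sgn_if)
  have bounds: "\<bar>D\<bar> / 2 \<le> sgn D * (deriv ^^ m) f t \<and> sgn D * (deriv ^^ m) f t \<le> 3 * \<bar>D\<bar> / 2"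
    if "\<bar>t - \<rho>0\<bar> < e" for t
  proof -
    have "\<bar>sgn D * (deriv ^^ m) f t - \<bar>D\<bar>\<bar> < \<bar>D\<bar> / 2"
      using close[OF that] sgnD by (metis abs_mult mult_1 right_diff_distrib)
    then show ?thesis by linarith
  qed
  define \<delta> where "\<delta> = min (e / 2) (\<rho>0 / 2)"
  have "\<exists>\<kappa>. f x = \<kappa> * (x - \<rho>0) ^ m \<and>
      \<bar>D\<bar> / (2 * fact m) \<le> sgn D * \<kappa> \<and> sgn D * \<kappa> \<le> 3 * \<bar>D\<bar> / (2 * fact m)"
    if x: "\<bar>x - \<rho>0\<bar> \<le> \<delta>" for x
  proof (cases "x = \<rho>0")
    case True
    then show ?thesis
      using vanish m sgnD by (intro exI[of _ "D / fact m"]) (auto simp: zero_power field_simps)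
  next
    case False
    moreover have "x > 0" using x r0 unfolding \<delta>_def by arith
    ultimately obtain t where t: "\<bar>t - \<rho>0\<bar> \<le> \<bar>x - \<rho>0\<bar>" "f x = (deriv ^^ m) f t / fact m * (x - \<rho>0) ^ m"
      using Taylor_at_zero_of_order[OF smooth vanish m r0] by metis
    have "\<bar>t - \<rho>0\<bar> < e" using t(1) x e by (auto simp: \<delta>_def)
    from bounds[OF this] have "\<bar>D\<bar> / (2 * fact m) \<le> sgn D * ((deriv ^^ m) f t / fact m)
        \<and> sgn D * ((deriv ^^ m) f t / fact m) \<le> 3 * \<bar>D\<bar> / (2 * fact m)"
      by (simp add: divide_right_mono field_simps)
    then show ?thesis using t(2) by blast
  qed
  moreover have "\<delta> > 0" using e r0 by (simp add: \<delta>_def)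
  ultimately show ?thesis by blast
qed

lemma Taylor_second_order_bound:
  fixes f :: "real \<Rightarrow> real"
  assumes smooth: "\<And>k t. t > 0 \<Longrightarrow> ((deriv ^^ k) f has_real_derivative (deriv ^^ Suc k) f t) (at t)"
    and r0: "\<rho>0 > 0" and zero: "f \<rho>0 = 0"
  shows "\<exists>\<delta>>0. \<exists>M. \<forall>x. \<bar>x - \<rho>0\<bar> \<le> \<delta> \<longrightarrow> \<bar>f x - deriv f \<rho>0 * (x - \<rho>0)\<bar> \<le> M * (x - \<rho>0)\<^sup>2"
proof -
  define \<delta> where "\<delta> = \<rho>0 / 2"
  have "continuous_on {\<rho>0 - \<delta>..\<rho>0 + \<delta>} ((deriv ^^ 2) f)"
    using r0 by (intro continuous_at_imp_continuous_on ballI DERIV_isCont[OF smooth]) (auto simp: \<delta>_def)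
  then have "bounded ((deriv ^^ 2) f ` {\<rho>0 - \<delta>..\<rho>0 + \<delta>})"
    by (intro compact_imp_bounded compact_continuous_image) auto
  then obtain B where B: "\<And>t. t \<in> {\<rho>0 - \<delta>..\<rho>0 + \<delta>} \<Longrightarrow> \<bar>(deriv ^^ 2) f t\<bar> \<le> B"
    unfolding bounded_iff by (metis image_eqI real_norm_def)
  have "\<bar>f x - deriv f \<rho>0 * (x - \<rho>0)\<bar> \<le> B / 2 * (x - \<rho>0)\<^sup>2" if x: "\<bar>x - \<rho>0\<bar> \<le> \<delta>" for x
  proof (cases "x = \<rho>0")
    case True
    then show ?thesis using zero by simp
  next
    case False
    have "\<exists>t. (if x < \<rho>0 then x < t \<and> t < \<rho>0 else \<rho>0 < t \<and> t < x) \<and>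
      f x = (\<Sum>m<2. (deriv ^^ m) f \<rho>0 / fact m * (x - \<rho>0) ^ m) + (deriv ^^ 2) f t / fact 2 * (x - \<rho>0)\<^sup>2"
      by (rule Taylor[where a="min x \<rho>0" and b="max x \<rho>0"])
         (use False x r0 in \<open>auto intro!: smooth simp: \<delta>_def abs_le_iff min_def max_def simp del: funpow.simps\<close>)
    then obtain t where t: "if x < \<rho>0 then x < t \<and> t < \<rho>0 else \<rho>0 < t \<and> t < x"
      "f x = (\<Sum>m<2. (deriv ^^ m) f \<rho>0 / fact m * (x - \<rho>0) ^ m) + (deriv ^^ 2) f t / fact 2 * (x - \<rho>0)\<^sup>2"
      by blast
    have "\<bar>(deriv ^^ 2) f t\<bar> \<le> B" using B t(1) x by (auto split: if_splits)
    moreover have "f x - deriv f \<rho>0 * (x - \<rho>0) = (deriv ^^ 2) f t / 2 * (x - \<rho>0)\<^sup>2"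
      using t(2) zero by (simp add: numeral_2_eq_2)
    ultimately show ?thesis
      by (simp only: abs_mult abs_divide abs_power2) (simp add: divide_right_mono mult_right_mono)
  qed
  moreover have "\<delta> > 0" using r0 by (simp add: \<delta>_def)
  ultimately show ?thesis by blast
qed

lemma has_real_derivative_at_atLeast:
  assumes "(g has_real_derivative d) (at z within {a..})" "a < z"
  shows "(g has_real_derivative d) (at z)"
proof -
  have "z \<in> interior {a..}" using interior_Ici[of "a - 1" a] assms(2) by auto
  then have "at z within {a..} = at z" by (rule at_within_interior)
  with assms(1) show ?thesis by simp
qed

lemma MVT_atLeast:
  fixes g g' :: "real \<Rightarrow> real"
  assumes D: "\<And>t. t \<ge> a \<Longrightarrow> (g has_real_derivative g' t) (at t within {a..})"
    and "a \<le> x" "x < y"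
  obtains z where "x < z" "z < y" "g y - g x = (y - x) * g' z"
proof -
  have "continuous_on {a..} g" by (rule DERIV_continuous_on[of _ _ g']) (use D in auto)
  then have cont: "continuous_on {x..y} g" by (rule continuous_on_subset) (use assms in auto)
  have der: "(g has_real_derivative g' z) (at z)" if "x < z" "z < y" for z
    using has_real_derivative_at_atLeast[OF D] that assms by auto
  have "\<exists>l z. x < z \<and> z < y \<and> DERIV g z :> l \<and> g y - g x = (y - x) * l"
  proof (rule MVT[OF assms(3) cont])
    show "g differentiable (at z)" if "x < z" "z < y" for z
      using der[OF that] real_differentiable_def by blast
  qed
  then obtain l z where z: "x < z" "z < y" "DERIV g z :> l" "g y - g x = (y - x) * l" by blast
  have "l = g' z" using DERIV_unique[OF z(3) der[OF z(1,2)]] .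
  then show ?thesis using that z by blast
qed

lemma DERIV_atLeast_lower_bound:
  fixes g g' :: "real \<Rightarrow> real"
  assumes D: "\<And>t. t \<ge> a \<Longrightarrow> (g has_real_derivative g' t) (at t within {a..})"
    and lo: "\<And>t. t \<ge> a \<Longrightarrow> c \<le> g' t" and "a \<le> x" "x \<le> y"
  shows "g x + c * (y - x) \<le> g y"
proof (cases "x = y")
  case False
  then obtain z where "x < z" "g y - g x = (y - x) * g' z"
    using MVT_atLeast[OF D \<open>a \<le> x\<close>] assms(4) by (metis order_le_less)
  moreover have "c * (y - x) \<le> g' z * (y - x)"
    using lo[of z] \<open>x < z\<close> assms by (intro mult_right_mono) auto
  ultimately show ?thesis by (simp add: mult.commute)
qed simp

lemma DERIV_atLeast_upper_bound:
  fixes g g' :: "real \<Rightarrow> real"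
  assumes D: "\<And>t. t \<ge> a \<Longrightarrow> (g has_real_derivative g' t) (at t within {a..})"
    and hi: "\<And>t. t \<ge> a \<Longrightarrow> g' t \<le> c" and "a \<le> x" "x \<le> y"
  shows "g y \<le> g x + c * (y - x)"
proof -
  have "- g x + - c * (y - x) \<le> - g y"
    by (rule DERIV_atLeast_lower_bound[where g'="\<lambda>t. - g' t"]) (use assms in \<open>auto intro!: DERIV_minus\<close>)
  then show ?thesis by simp
qed

lemma DERIV_atLeast_mono:
  "(g has_real_derivative d) (at t within {a..}) \<Longrightarrow> a \<le> b \<Longrightarrow>
    (g has_real_derivative d) (at t within {b..})"
  by (erule DERIV_subset) auto

lemma abs_cos_diff_le: "\<bar>cos x - cos y\<bar> \<le> \<bar>x - y :: real\<bar>"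
proof -
  have "\<bar>cos x - cos y\<bar> \<le> 2 * \<bar>sin ((y - x) / 2)\<bar>"
    by (simp add: cos_diff_cos abs_mult mult_left_le_one_le)
  also have "\<dots> \<le> \<bar>x - y\<bar>" using abs_sin_x_le_abs_x[of "(y - x) / 2"] by simp
  finally show ?thesis .
qed

lemma abs_sin_diff_le: "\<bar>sin x - sin y\<bar> \<le> \<bar>x - y :: real\<bar>"
proof -
  have "\<bar>sin x - sin y\<bar> \<le> 2 * \<bar>sin ((x - y) / 2)\<bar>"
    by (simp add: sin_diff_sin abs_mult mult_right_le_one_le)
  also have "\<dots> \<le> \<bar>x - y\<bar>" using abs_sin_x_le_abs_x[of "(x - y) / 2"] by simp
  finally show ?thesis .
qed

lemma abs_mult_diff_le:
  fixes g h :: "real \<Rightarrow> real"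
  assumes "\<bar>g x - g y\<bar> \<le> L * \<bar>x - y\<bar>" "\<bar>g y\<bar> \<le> B" "\<bar>h x - h y\<bar> \<le> \<bar>x - y\<bar>" "\<bar>h x\<bar> \<le> 1"
  shows "\<bar>g x * h x - g y * h y\<bar> \<le> (L + B) * \<bar>x - y\<bar>"
proof -
  have "g x * h x - g y * h y = (g x - g y) * h x + g y * (h x - h y)" by (simp add: algebra_simps)
  then have "\<bar>g x * h x - g y * h y\<bar> \<le> \<bar>g x - g y\<bar> * \<bar>h x\<bar> + \<bar>g y\<bar> * \<bar>h x - h y\<bar>"
    by (simp add: abs_mult[symmetric] abs_triangle_ineq)
  also have "\<bar>g x - g y\<bar> * \<bar>h x\<bar> \<le> L * \<bar>x - y\<bar>"
    using assms(1,4) by (metis abs_ge_zero mult_left_le mult_mono' order_trans)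
  also have "\<bar>g y\<bar> * \<bar>h x - h y\<bar> \<le> B * \<bar>x - y\<bar>"
    using assms(2,3) by (intro mult_mono) auto
  finally show ?thesis by (simp add: algebra_simps)
qed

lemma norm_polar: "norm (r * cos t, r * sin t) = \<bar>r\<bar>"
proof -
  have "(r * cos t)\<^sup>2 + (r * sin t)\<^sup>2 = r\<^sup>2"
    by (simp add: power_mult_distrib flip: distrib_left)
  then show ?thesis by (simp add: norm_Pair)
qed

lemma polar_form_exists: "\<exists>\<theta>. p = (norm p * cos \<theta>, norm p * sin \<theta>)"
proof -
  obtain x y where p: "p = (x, y)" by fastforce
  define z where "z = Complex x y"
  have "norm p = cmod z" by (simp add: z_def norm_Pair cmod_def p)
  moreover have "z = rcis (cmod z) (Arg z)" by (simp add: rcis_cmod_Arg)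
  then have "fst p = cmod z * cos (Arg z)" "snd p = cmod z * sin (Arg z)"
    by (metis Re_rcis complex.sel(1) z_def fst_conv p, metis Im_rcis complex.sel(2) z_def snd_conv p)
  ultimately show ?thesis by (intro exI[of _ "Arg z"]) (simp add: prod_eq_iff)
qed

lemma measure_ball_real2: "r \<ge> 0 \<Longrightarrow> measure lborel (ball (c::real \<times> real) r) = pi * r\<^sup>2"
  using content_ball[of r c] by (simp add: unit_ball_vol_2 power2_eq_square)

lemma measure_annulus:
  assumes "0 \<le> a" "a < b"
  shows "measure lborel (ball (0::real \<times> real) b - cball 0 a) = pi * (b\<^sup>2 - a\<^sup>2)"
proof -
  have "emeasure lborel (ball (0::real \<times> real) b) \<noteq> \<infinity>"
    using emeasure_lborel_ball_finite[of "0::real \<times> real" b] by (simp add: less_top)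
  then have "measure lborel (ball (0::real \<times> real) b - cball 0 a)
      = measure lborel (ball (0::real \<times> real) b) - measure lborel (cball (0::real \<times> real) a)"
    using assms by (intro measure_Diff) auto
  then show ?thesis
    using assms content_cball_conv_ball[of "0::real \<times> real" a]
    by (simp add: measure_ball_real2 algebra_simps)
qed

lemma open_eps_nbhd: "open (eps_nbhd B e)"
  unfolding eps_nbhd_def by auto

lemma eps_nbhd_subset_ball:
  assumes "\<And>b. b \<in> B \<Longrightarrow> norm b \<le> R"
  shows "eps_nbhd B e \<subseteq> ball 0 (R + e)"
proof
  fix x assume "x \<in> eps_nbhd B e"
  then obtain b where b: "b \<in> B" "dist b x < e" unfolding eps_nbhd_def by auto
  have "norm x \<le> norm b + dist b x"
    by (metis dist_norm norm_minus_commute norm_triangle_sub add.commute)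
  then show "x \<in> ball 0 (R + e)" using assms[OF b(1)] b(2) by (simp add: dist_norm)
qed

lemma fmeasurable_eps_nbhd:
  assumes "\<And>b. b \<in> B \<Longrightarrow> norm b \<le> R"
  shows "eps_nbhd B e \<in> fmeasurable lborel"
proof (rule fmeasurableI)
  show "eps_nbhd B e \<in> sets lborel" by (simp add: open_eps_nbhd)
  have "bounded (eps_nbhd B e)"
    by (rule bounded_subset[OF bounded_ball eps_nbhd_subset_ball[OF assms]])
  then show "emeasure lborel (eps_nbhd B e) < \<infinity>" by (rule emeasure_bounded_finite)
qed

lemma DERIV_exp_bound_imp_bounded_variation:
  fixes q q' :: "real \<Rightarrow> real"
  assumes D: "\<And>t. t \<ge> a \<Longrightarrow> (q has_real_derivative q' t) (at t within {a..})"
    and bound: "\<And>t. t \<ge> a \<Longrightarrow> \<bar>q' t\<bar> \<le> C * exp (- c * (t - a))" and c: "c > 0" and t: "a \<le> t"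
  shows "\<bar>q t - q a\<bar> \<le> C / c"
proof -
  define e where "e s = C / c * exp (- c * (s - a))" for s
  have e_deriv: "(e has_real_derivative - C * exp (- c * (s - a))) (at s within {a..})" for s
    unfolding e_def using c by (auto intro!: derivative_eq_intros)
  have b: "q' s - C * exp (- c * (s - a)) \<le> 0" "0 \<le> q' s + C * exp (- c * (s - a))" if "s \<ge> a" for s
    using bound[OF that] by (simp_all add: abs_le_iff)
  have "q t + e t \<le> q a + e a + 0 * (t - a)"
    using b(1) t by (intro DERIV_atLeast_upper_bound[where g'="\<lambda>s. q' s - C * exp (- c * (s - a))"])
       (auto intro!: DERIV_add[OF D e_deriv, simplified])
  moreover have "q a - e a + 0 * (t - a) \<le> q t - e t"
    using b(2) t by (intro DERIV_atLeast_lower_bound[where g'="\<lambda>s. q' s + C * exp (- c * (s - a))"])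
       (auto intro!: DERIV_diff[OF D e_deriv, simplified])
  moreover have "0 \<le> e t" "e a = C / c"
    using bound[of a] c by (auto simp: e_def)
  ultimately show ?thesis by (simp add: abs_le_iff)
qed

lemma bounded_on_atLeast:
  fixes h :: "real \<Rightarrow> real"
  assumes "continuous_on {a..b} h" "\<And>t. t \<ge> b \<Longrightarrow> \<bar>h t\<bar> \<le> C"
  obtains B where "\<And>t. t \<ge> a \<Longrightarrow> \<bar>h t\<bar> \<le> B"
proof -
  have "bounded (h ` {a..b})" by (intro compact_imp_bounded compact_continuous_image assms(1)) auto
  then obtain B where "\<And>t. t \<in> {a..b} \<Longrightarrow> \<bar>h t\<bar> \<le> B"
    unfolding bounded_iff by (metis image_eqI real_norm_def)
  then have "\<bar>h t\<bar> \<le> max B C" if "t \<ge> a" for t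
    using assms(2)[of t] that by (cases "t \<le> b") (auto intro: max.coboundedI1 max.coboundedI2)
  then show ?thesis by (rule that)
qed

lemma grid_point_near:
  fixes t a T h :: real
  assumes "h > 0" "a \<le> t" "t \<le> T"
  obtains k where "k \<le> nat \<lceil>(T - a) / h\<rceil>" "a \<le> a + real k * h" "\<bar>a + real k * h - t\<bar> \<le> h"
proof -
  define k where "k = nat \<lfloor>(t - a) / h\<rfloor>"
  have "(t - a) / h \<ge> 0" using assms by simp
  then have k: "real k \<le> (t - a) / h" "(t - a) / h < real k + 1" by (simp_all add: k_def)
  have "(t - a) / h \<le> (T - a) / h" using assms by (simp add: divide_right_mono)
  then have "k \<le> nat \<lceil>(T - a) / h\<rceil>" unfolding k_def
    by (meson ceiling_mono floor_le_ceiling nat_mono order_trans)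
  moreover have "real k * h \<le> t - a" "t - a < real k * h + h"
    using k assms(1) by (simp_all add: field_simps)
  ultimately show ?thesis using assms by (intro that[of k]) auto
qed

lemma angle_in_turn:
  obtains \<psi> where "ts \<le> \<psi>" "\<psi> \<le> ts + 2 * pi" "cos \<psi> = cos \<theta>" "sin \<psi> = sin \<theta>"
proof -
  define n where "n = \<lceil>(ts - \<theta>) / (2 * pi)\<rceil>"
  have "(ts - \<theta>) / (2 * pi) \<le> n" "n < (ts - \<theta>) / (2 * pi) + 1"
    unfolding n_def by linarith+
  then have "ts \<le> \<theta> + 2 * pi * n" "\<theta> + 2 * pi * n \<le> ts + 2 * pi"
    by (simp_all add: field_simps)
  moreover have "cos (\<theta> + 2 * pi * n) = cos \<theta> \<and> sin (\<theta> + 2 * pi * n) = sin \<theta>"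
    using sin_cos_eq_iff by blast
  ultimately show ?thesis using that by auto
qed

lemma measure_one_sided_annulus:
  assumes s: "s = 1 \<or> s = -1" and w: "0 < w" "w \<le> r"
  defines "A \<equiv> {p :: real \<times> real. 0 < s * (norm p - r) \<and> \<bar>norm p - r\<bar> < w}"
  shows "A \<in> sets lborel" "pi * r * w \<le> measure lborel A"
proof -
  have "A = (if s = 1 then ball 0 (r + w) - cball 0 r else ball 0 r - cball 0 (r - w))"
    using s by (auto simp: A_def mem_ball_0 mem_cball_0 abs_less_iff)
  moreover have "pi * r * w \<le> pi * ((r + w)\<^sup>2 - r\<^sup>2)" "pi * r * w \<le> pi * (r\<^sup>2 - (r - w)\<^sup>2)"
    using w by (simp_all add: power2_eq_square algebra_simps)
  ultimately show "A \<in> sets lborel" "pi * r * w \<le> measure lborel A"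
    using w measure_annulus[of r "r + w"] measure_annulus[of "r - w" r] by auto
qed

section \<open>A criterion for box dimension\<close>

lemma Inf_eq_threshold:
  fixes d :: real
  assumes "\<And>s. s > d \<Longrightarrow> P s" "\<And>s. s < d \<Longrightarrow> \<not> P s"
  shows "Inf {s. P s} = d"
proof (rule antisym)
  have lower: "\<And>x. x \<in> {s. P s} \<Longrightarrow> d \<le> x" using assms(2) by force
  then have "bdd_below {s. P s}" by (auto simp: bdd_below_def)
  then have "Inf {s. P s} \<le> d + e" if "e > 0" for e
    by (rule cInf_lower[rotated]) (use assms(1) that in auto)
  then show "Inf {s. P s} \<le> d" by (rule field_le_epsilon)
  show "d \<le> Inf {s. P s}"
    using assms(1)[of "d + 1"] lower by (intro cInf_greatest) auto
qed

lemma has_box_dimI: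
  assumes upper: "\<And>s. s > d \<Longrightarrow>
      ((\<lambda>\<epsilon>. measure lborel (eps_nbhd B \<epsilon>) / \<epsilon> powr (2 - s)) \<longlongrightarrow> 0) (at_right 0)"
    and lower: "\<And>s. s < d \<Longrightarrow>
      \<forall>\<^sub>F \<epsilon> in at_right 0. measure lborel (eps_nbhd B \<epsilon>) / \<epsilon> powr (2 - s) \<ge> 1"
  shows "has_box_dim B d"
proof -
  define q where "q s \<epsilon> = ereal (measure lborel (eps_nbhd B \<epsilon>) / \<epsilon> powr (2 - s))" for s \<epsilon>
  have nt: "\<not> trivial_limit (at_right (0::real))" by simp
  have zero: "Limsup (at_right 0) (q s) = 0" "Liminf (at_right 0) (q s) = 0" if "s > d" for s
  proof -
    have "(q s \<longlongrightarrow> ereal 0) (at_right 0)"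
      unfolding q_def by (rule tendsto_ereal[OF upper[OF that]])
    then show "Limsup (at_right 0) (q s) = 0" "Liminf (at_right 0) (q s) = 0"
      using lim_imp_Limsup[OF nt] lim_imp_Liminf[OF nt] by (simp_all add: zero_ereal_def)
  qed
  have nonzero: "Liminf (at_right 0) (q s) \<ge> 1" "Limsup (at_right 0) (q s) \<ge> 1" if "s < d" for s
  proof -
    have "\<forall>\<^sub>F \<epsilon> in at_right 0. 1 \<le> q s \<epsilon>"
      using lower[OF that] by eventually_elim (simp add: q_def one_ereal_def)
    then show *: "Liminf (at_right 0) (q s) \<ge> 1" by (rule Liminf_bounded)
    then show "Limsup (at_right 0) (q s) \<ge> 1"
      using Liminf_le_Limsup[OF nt] order_trans by blast
  qed
  have "Inf {s. Limsup (at_right 0) (q s) = 0} = d" "Inf {s. Liminf (at_right 0) (q s) = 0} = d"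
    by (rule Inf_eq_threshold; use zero nonzero in force)+
  then show ?thesis
    unfolding has_box_dim_def upper_box_dim_def lower_box_dim_def q_def by simp
qed

lemma tendsto_powr_at_right_0:
  fixes p :: real
  assumes "p > 0"
  shows "((\<lambda>x. C * x powr p) \<longlongrightarrow> 0) (at_right 0)"
proof -
  have "((\<lambda>x::real. x powr p) \<longlongrightarrow> 0) (at_right 0)"
    by (rule tendsto_zero_powrI[where b=p])
       (use assms in \<open>auto intro: tendsto_ident_at eventually_at_rightI[of 0 1]\<close>)
  from tendsto_mult_right_zero[OF this, of C] show ?thesis by simp
qed

lemma filterlim_powr_neg_at_right_0:
  fixes r :: real
  assumes "r < 0"
  shows "filterlim (\<lambda>x. x powr r) at_top (at_right 0)"
proof -
  have "filterlim (\<lambda>x::real. x powr (- r)) (at_right 0) (at_right 0)"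
  proof (rule tendsto_imp_filterlim_at_right)
    show "((\<lambda>x::real. x powr (- r)) \<longlongrightarrow> 0) (at_right 0)"
      using tendsto_powr_at_right_0[of "- r" 1] assms by simp
    show "\<forall>\<^sub>F x in at_right 0. 0 < (x::real) powr (- r)"
      by (rule eventually_mono[OF eventually_at_right_less]) simp
  qed
  from filterlim_compose[OF filterlim_inverse_at_top_right this]
  show ?thesis by (simp add: powr_minus[symmetric])
qed

lemma powr_ratio_tendsto_0:
  fixes A :: "real \<Rightarrow> real"
  assumes bound: "\<forall>\<^sub>F \<epsilon> in at_right 0. A \<epsilon> \<le> C * \<epsilon> powr p" and nonneg: "\<And>\<epsilon>. A \<epsilon> \<ge> 0"
    and "q < p"
  shows "((\<lambda>\<epsilon>. A \<epsilon> / \<epsilon> powr q) \<longlongrightarrow> 0) (at_right 0)"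
proof (rule tendsto_sandwich[OF _ _ tendsto_const tendsto_powr_at_right_0])
  show "\<forall>\<^sub>F \<epsilon> in at_right 0. 0 \<le> A \<epsilon> / \<epsilon> powr q" using nonneg by simp
  show "\<forall>\<^sub>F \<epsilon> in at_right 0. A \<epsilon> / \<epsilon> powr q \<le> C * \<epsilon> powr (p - q)"
    using bound eventually_at_right_less[of 0]
  proof eventually_elim
    case (elim \<epsilon>)
    then have "A \<epsilon> / \<epsilon> powr q \<le> C * \<epsilon> powr p / \<epsilon> powr q" by (simp add: divide_right_mono)
    then show ?case by (simp add: powr_diff)
  qed
qed (use assms(3) in simp)

lemma powr_ratio_eventually_ge_1:
  fixes A :: "real \<Rightarrow> real"
  assumes "\<kappa> > 0" "\<forall>\<^sub>F \<epsilon> in at_right 0. \<kappa> * \<epsilon> powr p \<le> A \<epsilon>" and "p < q"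
  shows "\<forall>\<^sub>F \<epsilon> in at_right 0. 1 \<le> A \<epsilon> / \<epsilon> powr q"
proof -
  have "filterlim (\<lambda>\<epsilon>. \<epsilon> powr (p - q)) at_top (at_right 0)"
    using assms(3) by (intro filterlim_powr_neg_at_right_0) simp
  then have "\<forall>\<^sub>F \<epsilon> in at_right 0. 1 / \<kappa> \<le> \<epsilon> powr (p - q)"
    unfolding filterlim_at_top by blast
  then show ?thesis using assms(2) eventually_at_right_less[of 0]
  proof eventually_elim
    case (elim \<epsilon>)
    have "1 \<le> \<kappa> * \<epsilon> powr (p - q)" using mult_left_mono[OF elim(1), of \<kappa>] assms(1) by simp
    also have "\<dots> = \<kappa> * \<epsilon> powr p / \<epsilon> powr q" using elim by (simp add: powr_diff)
    also have "\<dots> \<le> A \<epsilon> / \<epsilon> powr q" using elim by (simp add: divide_right_mono)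
    finally show ?case .
  qed
qed

section \<open>Spirals approaching a limit cycle\<close>

locale spiral_tail =
  fixes f :: "real \<Rightarrow> real" and \<rho>0 t1 \<sigma> :: real and G :: "real \<Rightarrow> real" and m :: nat
    and \<delta> kl ku sD :: real
  assumes pos_radius: "\<rho>0 > 0" and orientation: "\<sigma> = 1 \<or> \<sigma> = -1" and order_pos: "m \<ge> 1"
    and f_cont: "\<And>x. x > 0 \<Longrightarrow> isCont f x"
    and G_pos: "\<And>t. t \<ge> t1 \<Longrightarrow> G t > 0" and G_ne: "\<And>t. t \<ge> t1 \<Longrightarrow> G t \<noteq> \<rho>0"
    and G_deriv: "\<And>t. t \<ge> t1 \<Longrightarrow> (G has_real_derivative \<sigma> * (- G t * f (G t))) (at t within {t1..})"
    and G_tendsto: "(G \<longlongrightarrow> \<rho>0) at_top"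
    and pos_delta: "\<delta> > 0" and pos_kl: "kl > 0" and sign_sD: "sD = 1 \<or> sD = -1"
    and local_factorization: "\<And>x. \<bar>x - \<rho>0\<bar> \<le> \<delta> \<Longrightarrow>
      \<exists>\<kappa>. f x = \<kappa> * (x - \<rho>0) ^ m \<and> kl \<le> sD * \<kappa> \<and> sD * \<kappa> \<le> ku"
begin

definition side :: real where "side = (if G t1 > \<rho>0 then 1 else -1)"

definition dev :: "real \<Rightarrow> real" where "dev t = side * (G t - \<rho>0)"

definition dev_deriv :: "real \<Rightarrow> real" where "dev_deriv t = side * (\<sigma> * (- G t * f (G t)))"

definition drift_sign :: real where "drift_sign = side ^ Suc m * \<sigma> * sD"

lemma side_cases: "side = 1 \<or> side = -1"
  by (auto simp: side_def)

lemma abs_orientation: "\<bar>\<sigma>\<bar> = 1"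
  using orientation by auto

lemma kl_le_ku: "kl \<le> ku"
  using local_factorization[of \<rho>0] pos_delta by auto

lemma G_continuous_on: "continuous_on {t1..} G"
  by (rule DERIV_continuous_on[of _ _ "\<lambda>t. \<sigma> * (- G t * f (G t))"]) (use G_deriv in auto)

lemma dev_continuous_on: "continuous_on {t1..} dev"
  unfolding dev_def by (intro continuous_intros G_continuous_on)

lemma dev_has_derivative: "t \<ge> t1 \<Longrightarrow> (dev has_real_derivative dev_deriv t) (at t within {t1..})"
  unfolding dev_def dev_deriv_def by (rule derivative_eq_intros G_deriv refl | simp)+

lemma dev_pos:
  assumes "t \<ge> t1"
  shows "dev t > 0"
proof (rule ccontr)
  assume "\<not> dev t > 0"
  moreover have "0 \<le> dev t1" using G_ne[of t1] by (auto simp: dev_def side_def)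
  ultimately obtain x where "t1 \<le> x" "dev x = 0"
    using IVT2'[of dev t 0 t1] assms continuous_on_subset[OF dev_continuous_on] by force
  then show False using G_ne[of x] side_cases by (auto simp: dev_def)
qed

lemma dev_eq_abs: "t \<ge> t1 \<Longrightarrow> dev t = \<bar>G t - \<rho>0\<bar>"
  using dev_pos[of t] side_cases by (auto simp: dev_def)

lemma G_eq_dev: "G t = \<rho>0 + side * dev t"
  using side_cases by (auto simp: dev_def)

lemma dev_tendsto_0: "(dev \<longlongrightarrow> 0) at_top"
proof -
  have "((\<lambda>t. side * (G t - \<rho>0)) \<longlongrightarrow> side * (\<rho>0 - \<rho>0)) at_top"
    by (intro tendsto_intros G_tendsto)
  then show ?thesis by (simp add: dev_def[abs_def])
qed

lemma dev_deriv_factor: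
  assumes t: "t \<ge> t1" and small: "dev t \<le> \<delta>" "dev t \<le> \<rho>0 / 2"
  obtains P where "dev_deriv t = - drift_sign * P"
    "\<rho>0 / 2 * kl * dev t ^ m \<le> P" "P \<le> 3 * \<rho>0 / 2 * ku * dev t ^ m"
proof -
  obtain \<kappa> where \<kappa>: "f (G t) = \<kappa> * (G t - \<rho>0) ^ m" "kl \<le> sD * \<kappa>" "sD * \<kappa> \<le> ku"
    using local_factorization small dev_eq_abs[OF t] by auto
  have G_bounds: "\<rho>0 / 2 \<le> G t" "G t \<le> 3 * \<rho>0 / 2"
    using G_eq_dev[of t] small side_cases dev_pos[OF t] by auto
  define P where "P = G t * (sD * \<kappa>) * dev t ^ m"
  have "G t - \<rho>0 = side * dev t" using G_eq_dev[of t] by simp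
  then have "dev_deriv t = side * (\<sigma> * (- G t * (\<kappa> * (side * dev t) ^ m)))"
    by (simp add: dev_deriv_def \<kappa>)
  also have "\<dots> = - drift_sign * P"
    using sign_sD by (auto simp: drift_sign_def P_def power_mult_distrib algebra_simps)
  finally have "dev_deriv t = - drift_sign * P" .
  moreover have "dev t ^ m \<ge> 0" using dev_pos[OF t] by simp
  then have "\<rho>0 / 2 * kl * dev t ^ m \<le> P" "P \<le> 3 * \<rho>0 / 2 * ku * dev t ^ m"
    unfolding P_def using pos_radius pos_kl G_bounds \<kappa>
    by (intro mult_right_mono mult_mono; force)+
  ultimately show ?thesis by (rule that)
qed

lemma dev_eventually_small:
  obtains ta where "ta \<ge> t1" "\<And>t. t \<ge> ta \<Longrightarrow> dev t \<le> \<delta> \<and> dev t \<le> \<rho>0 / 2 \<and> dev t \<le> 1"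
proof -
  have "\<forall>\<^sub>F t in at_top. dev t < min \<delta> (min (\<rho>0 / 2) 1)"
    using dev_tendsto_0 pos_delta pos_radius by (intro order_tendstoD) auto
  then obtain ta where "\<And>t. t \<ge> ta \<Longrightarrow> dev t < min \<delta> (min (\<rho>0 / 2) 1)"
    unfolding eventually_at_top_linorder by blast
  then have "dev t \<le> \<delta> \<and> dev t \<le> \<rho>0 / 2 \<and> dev t \<le> 1" if "t \<ge> max ta t1" for t
    using that by fastforce
  then show ?thesis by (intro that[of "max ta t1"]) auto
qed

text \<open>Otherwise \<open>dev\<close> would eventually be nondecreasing, contradicting \<open>dev \<longlongrightarrow> 0\<close>.\<close>

lemma drift_sign_eq_1: "drift_sign = 1"
proof (rule ccontr)
  assume "drift_sign \<noteq> 1"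
  then have neg: "drift_sign = -1"
    using side_cases orientation sign_sD by (auto simp: drift_sign_def minus_one_power_iff split: if_splits)
  obtain ta where ta: "ta \<ge> t1" and small: "\<And>t. t \<ge> ta \<Longrightarrow> dev t \<le> \<delta> \<and> dev t \<le> \<rho>0 / 2 \<and> dev t \<le> 1"
    using dev_eventually_small by blast
  have nonneg: "dev_deriv t \<ge> 0" if t: "t \<ge> ta" for t
  proof -
    obtain P where "dev_deriv t = - drift_sign * P" "\<rho>0 / 2 * kl * dev t ^ m \<le> P"
      using dev_deriv_factor[of t] small[OF t] t ta by auto
    moreover have "\<rho>0 / 2 * kl * dev t ^ m \<ge> 0" using dev_pos[of t] ta t pos_radius pos_kl by auto
    ultimately show ?thesis using neg by simp
  qed
  have "(dev has_real_derivative dev_deriv s) (at s within {ta..})" if "s \<ge> ta" for s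
    using ta that by (intro DERIV_atLeast_mono[OF dev_has_derivative]) auto
  then have increasing: "dev ta \<le> dev t" if "t \<ge> ta" for t
    using DERIV_atLeast_lower_bound[of ta dev dev_deriv 0 ta t] nonneg that by simp
  have "\<forall>\<^sub>F t in at_top. dev t < dev ta"
    using dev_tendsto_0 dev_pos[OF ta] by (intro order_tendstoD) auto
  then obtain tb where "\<And>t. t \<ge> tb \<Longrightarrow> dev t < dev ta"
    unfolding eventually_at_top_linorder by blast
  then have "dev (max ta tb) < dev ta" by simp
  with increasing[of "max ta tb"] show False by linarith
qed

lemma dev_eventually_power_bounds:
  obtains t0 c1 c2 where "t0 \<ge> t1" "c1 > 0" "c2 > 0"
    "\<And>t. t \<ge> t0 \<Longrightarrow> dev t \<le> \<delta> \<and> dev t \<le> \<rho>0 / 2 \<and> dev t \<le> 1 \<and>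
      - c2 * dev t ^ m \<le> dev_deriv t \<and> dev_deriv t \<le> - c1 * dev t ^ m"
proof -
  obtain ta where ta: "ta \<ge> t1" and small: "\<And>t. t \<ge> ta \<Longrightarrow> dev t \<le> \<delta> \<and> dev t \<le> \<rho>0 / 2 \<and> dev t \<le> 1"
    using dev_eventually_small by blast
  have "- (3 * \<rho>0 / 2 * ku) * dev t ^ m \<le> dev_deriv t \<and> dev_deriv t \<le> - (\<rho>0 / 2 * kl) * dev t ^ m"
    if t: "t \<ge> ta" for t
  proof -
    obtain P where "dev_deriv t = - drift_sign * P"
      "\<rho>0 / 2 * kl * dev t ^ m \<le> P" "P \<le> 3 * \<rho>0 / 2 * ku * dev t ^ m"
      using dev_deriv_factor[of t] small[OF t] t ta by auto
    then show ?thesis using drift_sign_eq_1 by auto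
  qed
  moreover have "\<rho>0 / 2 * kl > 0" "3 * \<rho>0 / 2 * ku > 0" using pos_radius pos_kl kl_le_ku by auto
  ultimately show ?thesis using small ta by (intro that[of ta "\<rho>0 / 2 * kl" "3 * \<rho>0 / 2 * ku"]) auto
qed

end

locale spiral_tail_decay = spiral_tail +
  fixes t0 c1 c2 :: real
  assumes t1_le_t0: "t0 \<ge> t1" and c1_pos: "c1 > 0" and c2_pos: "c2 > 0"
    and decay_bounds: "\<And>t. t \<ge> t0 \<Longrightarrow> dev t \<le> \<delta> \<and> dev t \<le> \<rho>0 / 2 \<and> dev t \<le> 1 \<and>
      - c2 * dev t ^ m \<le> dev_deriv t \<and> dev_deriv t \<le> - c1 * dev t ^ m"
begin

lemma dev_has_derivative_t0: "t \<ge> t0 \<Longrightarrow> (dev has_real_derivative dev_deriv t) (at t within {t0..})"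
  by (rule DERIV_atLeast_mono[OF dev_has_derivative]) (use t1_le_t0 in auto)

lemma dev_pos_t0: "t \<ge> t0 \<Longrightarrow> dev t > 0"
  using dev_pos t1_le_t0 by auto

lemma dev_deriv_nonpos:
  assumes "t \<ge> t0"
  shows "dev_deriv t \<le> 0"
proof -
  have "c1 * dev t ^ m \<ge> 0" using dev_pos_t0[OF assms] c1_pos by simp
  then show ?thesis using decay_bounds[OF assms] by linarith
qed

lemma dev_decreasing: "t0 \<le> x \<Longrightarrow> x \<le> y \<Longrightarrow> dev y \<le> dev x"
  using DERIV_atLeast_upper_bound[OF dev_has_derivative_t0 dev_deriv_nonpos, of x y] by simp

lemma dev_power_le: "t \<ge> t0 \<Longrightarrow> dev t ^ m \<le> dev t"
  using power_decreasing[of 1 m "dev t"] decay_bounds[of t] dev_pos_t0[of t] order_pos by simp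

lemma dev_drop_per_turn:
  assumes t: "t \<ge> t0"
  shows "dev t - dev (t + 2 * pi) \<le> 2 * pi * c2 * dev t ^ m"
proof -
  have "- c2 * dev t ^ m \<le> dev_deriv s" if "s \<ge> t" for s
  proof -
    have "dev s ^ m \<le> dev t ^ m"
      using dev_decreasing[OF t that] dev_pos_t0[of s] t that by (intro power_mono) auto
    then have "c2 * dev s ^ m \<le> c2 * dev t ^ m" using c2_pos by (intro mult_left_mono) auto
    then show ?thesis using decay_bounds[of s] t that by linarith
  qed
  then have "dev t + - c2 * dev t ^ m * (t + 2 * pi - t) \<le> dev (t + 2 * pi)"
    using t by (intro DERIV_atLeast_lower_bound[of t dev dev_deriv])
               (auto intro: DERIV_atLeast_mono[OF dev_has_derivative_t0])
  then show ?thesis by (simp add: algebra_simps)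
qed

lemma ln_dev_has_derivative:
  "t \<ge> t0 \<Longrightarrow> ((\<lambda>s. ln (dev s)) has_real_derivative dev_deriv t / dev t) (at t within {t0..})"
  using DERIV_chain2[OF DERIV_ln_divide dev_has_derivative_t0] dev_pos_t0 by simp

lemma dev_ratio_per_turn:
  assumes t: "t \<ge> t0"
  shows "dev (t + 2 * pi) \<ge> exp (- 2 * pi * c2) * dev t"
proof -
  have "- c2 \<le> dev_deriv s / dev s" if s: "s \<ge> t0" for s
  proof -
    have "c2 * dev s ^ m \<le> c2 * dev s" using dev_power_le[OF s] c2_pos by (intro mult_left_mono) auto
    then show ?thesis using decay_bounds[OF s] dev_pos_t0[OF s] by (simp add: field_simps)
  qed
  then have "ln (dev t) + - c2 * (t + 2 * pi - t) \<le> ln (dev (t + 2 * pi))"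
    using t by (intro DERIV_atLeast_lower_bound[OF ln_dev_has_derivative]) auto
  then have "exp (ln (dev t) - 2 * pi * c2) \<le> exp (ln (dev (t + 2 * pi)))"
    by (simp add: algebra_simps)
  moreover have "dev (t + 2 * pi) > 0" using t pi_gt_zero by (intro dev_pos_t0) linarith
  ultimately have "exp (ln (dev t) - 2 * pi * c2) \<le> dev (t + 2 * pi)" by simp
  then show ?thesis using dev_pos_t0[OF t] by (simp add: exp_diff exp_minus field_simps)
qed

text \<open>For \<open>m > 1\<close>, \<open>- dev' \<asymp> dev^m\<close> makes \<open>dev powr (1 - m)\<close> grow linearly in the angle.\<close>

lemma powr_dev_deriv_bounds:
  assumes m1: "m > 1" and s: "s \<ge> t0"
  defines "W' \<equiv> (1 - real m) * dev s powr (- real m) * dev_deriv s"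
  shows "((\<lambda>s. dev s powr (1 - real m)) has_real_derivative W') (at s within {t0..})"
    and "(real m - 1) * c1 \<le> W'" "W' \<le> (real m - 1) * c2"
proof -
  show "((\<lambda>s. dev s powr (1 - real m)) has_real_derivative W') (at s within {t0..})"
    using DERIV_chain2[OF has_real_derivative_powr[OF dev_pos_t0[OF s], of "1 - real m"]
        dev_has_derivative_t0[OF s]]
    by (simp add: W'_def)
  have pos: "dev s ^ m > 0" using dev_pos_t0[OF s] by simp
  define q where "q = - dev_deriv s / dev s ^ m"
  have "W' = (real m - 1) * q"
    using dev_pos_t0[OF s] by (simp add: W'_def q_def powr_minus powr_realpow divide_simps)
       (simp add: algebra_simps)
  moreover have "c1 \<le> q" "q \<le> c2"
    using decay_bounds[OF s] pos by (simp_all add: q_def field_simps)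
  ultimately show "(real m - 1) * c1 \<le> W'" "W' \<le> (real m - 1) * c2"
    using m1 by (simp_all add: mult_left_mono)
qed

lemma powr_dev_linear_bounds:
  assumes m1: "m > 1"
  obtains b1 b2 T where "b1 > 0" "b2 > 0" "T \<ge> t0" "T \<ge> 1"
    "\<And>t. t \<ge> T \<Longrightarrow> b1 * t \<le> dev t powr (1 - real m) \<and> dev t powr (1 - real m) \<le> b2 * t"
proof -
  define W where "W t = dev t powr (1 - real m)" for t
  define a1 where "a1 = (real m - 1) * c1"
  define a2 where "a2 = (real m - 1) * c2"
  have a: "a1 > 0" "a2 > 0" using m1 c1_pos c2_pos by (auto simp: a1_def a2_def)
  have W0: "W t0 > 0" using dev_pos_t0[of t0] by (simp add: W_def)
  define T where "T = max (max (2 * \<bar>t0\<bar>) 1) t0"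
  have "a1 / 2 * t \<le> W t \<and> W t \<le> (W t0 + a2 + a2 * \<bar>t0\<bar>) * t" if t: "t \<ge> T" for t
  proof -
    have tT: "t \<ge> t0" "t \<ge> 1" "t \<ge> 2 * \<bar>t0\<bar>" using t by (auto simp: T_def)
    have W_lin: "W t0 + a1 * (t - t0) \<le> W t" "W t \<le> W t0 + a2 * (t - t0)"
      using DERIV_atLeast_lower_bound[OF powr_dev_deriv_bounds(1)[OF m1] powr_dev_deriv_bounds(2)[OF m1]]
        DERIV_atLeast_upper_bound[OF powr_dev_deriv_bounds(1)[OF m1] powr_dev_deriv_bounds(3)[OF m1]]
        tT(1) by (auto simp: W_def a1_def a2_def)
    have "a1 * t0 \<le> a1 * (t / 2)" using a tT by (intro mult_left_mono) auto
    then have "a1 / 2 * t \<le> a1 * (t - t0)" by (simp add: algebra_simps)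
    moreover have "- t0 \<le> \<bar>t0\<bar> * t" using tT by (smt (verit) mult_le_cancel_left1)
    then have "a2 * (t - t0) \<le> a2 * t + a2 * \<bar>t0\<bar> * t"
      using a(2) mult_left_mono[of "- t0" "\<bar>t0\<bar> * t" a2] by (simp add: algebra_simps)
    moreover have "W t0 \<le> W t0 * t" using tT W0 by simp
    moreover have "(W t0 + a2 + a2 * \<bar>t0\<bar>) * t = W t0 * t + a2 * t + a2 * \<bar>t0\<bar> * t"
      by (simp add: algebra_simps)
    ultimately show ?thesis using W_lin W0 by linarith
  qed
  moreover have "W t0 + a2 + a2 * \<bar>t0\<bar> > 0" using a W0 by (simp add: add_pos_nonneg)
  ultimately show ?thesis using a by (intro that[of "a1 / 2" _ T]) (auto simp: W_def T_def)
qed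

lemma comparable_power_spiral:
  assumes m1: "m > 1"
  shows "comparable G \<rho>0 (\<lambda>\<phi>. \<bar>\<phi>\<bar> powr (- 1 / (real m - 1))) at_top"
proof -
  obtain b1 b2 T where b: "b1 > 0" "b2 > 0" and T: "T \<ge> t0" "T \<ge> 1"
    and W: "\<And>t. t \<ge> T \<Longrightarrow> b1 * t \<le> dev t powr (1 - real m) \<and> dev t powr (1 - real m) \<le> b2 * t"
    using powr_dev_linear_bounds[OF m1] by blast
  define \<alpha> where "\<alpha> = 1 / (real m - 1)"
  have \<alpha>: "\<alpha> > 0" "- 1 / (real m - 1) = - \<alpha>" using m1 by (simp_all add: \<alpha>_def)
  have "b2 powr (- \<alpha>) * t powr (- \<alpha>) \<le> dev t \<and> dev t \<le> b1 powr (- \<alpha>) * t powr (- \<alpha>)"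
    if t: "t \<ge> T" for t
  proof -
    have pos: "dev t > 0" using t T by (intro dev_pos_t0) simp
    have "(1 - real m) * - \<alpha> = 1" using m1 by (simp add: \<alpha>_def field_simps)
    then have "dev t = (dev t powr (1 - real m)) powr (- \<alpha>)"
      using pos by (simp add: powr_powr)
    moreover have "(b2 * t) powr (- \<alpha>) \<le> (dev t powr (1 - real m)) powr (- \<alpha>)"
      "(dev t powr (1 - real m)) powr (- \<alpha>) \<le> (b1 * t) powr (- \<alpha>)"
      using W[OF t] b t T \<alpha> pos by (auto intro!: powr_mono2')
    ultimately show ?thesis using b t T by (simp add: powr_mult)
  qed
  then have "\<forall>\<^sub>F \<phi> in at_top. b2 powr (- \<alpha>) * \<bar>\<phi>\<bar> powr (- 1 / (real m - 1)) \<le> \<bar>G \<phi> - \<rho>0\<bar> \<and>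
      \<bar>G \<phi> - \<rho>0\<bar> \<le> b1 powr (- \<alpha>) * \<bar>\<phi>\<bar> powr (- 1 / (real m - 1))"
    unfolding eventually_at_top_linorder \<alpha>(2)
    using T t1_le_t0 by (intro exI[of _ T]) (auto simp: dev_eq_abs[symmetric])
  moreover have "b2 powr (- \<alpha>) > 0" "b1 powr (- \<alpha>) > 0" using b by simp_all
  ultimately show ?thesis unfolding comparable_def by blast
qed

definition curve :: "real \<Rightarrow> real \<times> real" where
  "curve t = (G t * cos t, \<sigma> * (G t * sin t))"

definition spiral :: "(real \<times> real) set" where
  "spiral = curve ` {t1..}"

lemma norm_curve:
  assumes "t \<ge> t1"
  shows "norm (curve t) = G t"
proof -
  have "norm (curve t) = norm (G t * cos t, G t * sin t)"
    using orientation by (auto simp: curve_def norm_Pair power_mult_distrib)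
  then show ?thesis using norm_polar G_pos[OF assms] by simp
qed

lemma G_deriv_bounded:
  obtains L where "\<And>t. t \<ge> t1 \<Longrightarrow> \<bar>\<sigma> * (- G t * f (G t))\<bar> \<le> L"
proof (rule bounded_on_atLeast)
  have "continuous_on {t1..t0} G" by (rule continuous_on_subset[OF G_continuous_on]) auto
  moreover have "continuous_on {0<..} f" by (intro continuous_at_imp_continuous_on ballI f_cont) auto
  ultimately have "continuous_on {t1..t0} (\<lambda>t. f (G t))"
    using continuous_on_compose2[of "{0<..}" f "{t1..t0}" G] G_pos by force
  with \<open>continuous_on {t1..t0} G\<close>
  show "continuous_on {t1..t0} (\<lambda>t. \<sigma> * (- G t * f (G t)))" by (intro continuous_intros)
  fix t assume t: "t \<ge> t0"
  have "\<bar>\<sigma> * (- G t * f (G t))\<bar> = \<bar>dev_deriv t\<bar>"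
    using side_cases by (auto simp: dev_deriv_def abs_mult)
  also have "\<dots> \<le> c2"
  proof -
    have "dev t ^ m \<le> 1" using decay_bounds[OF t] dev_pos_t0[OF t] by (simp add: power_le_one)
    then have "c2 * dev t ^ m \<le> c2" using c2_pos by (simp add: mult_left_le)
    then show ?thesis using decay_bounds[OF t] dev_deriv_nonpos[OF t] by auto
  qed
  finally show "\<bar>\<sigma> * (- G t * f (G t))\<bar> \<le> c2" .
qed (rule that)

lemma G_bounded:
  obtains B where "\<And>t. t \<ge> t1 \<Longrightarrow> \<bar>G t\<bar> \<le> B"
proof (rule bounded_on_atLeast)
  show "continuous_on {t1..t0} G" by (rule continuous_on_subset[OF G_continuous_on]) auto
  show "\<bar>G t\<bar> \<le> 2 * \<rho>0" if "t \<ge> t0" for t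
    using G_eq_dev[of t] decay_bounds[OF that] dev_pos_t0[OF that] side_cases pos_radius by auto
qed (rule that)

lemma G_lipschitz:
  obtains L where "L \<ge> 0" "\<And>x y. x \<ge> t1 \<Longrightarrow> y \<ge> t1 \<Longrightarrow> \<bar>G x - G y\<bar> \<le> L * \<bar>x - y\<bar>"
proof -
  obtain L where L: "\<And>t. t \<ge> t1 \<Longrightarrow> \<bar>\<sigma> * (- G t * f (G t))\<bar> \<le> L"
    using G_deriv_bounded by blast
  have ordered: "\<bar>G y - G x\<bar> \<le> L * (y - x)" if "t1 \<le> x" "x \<le> y" for x y
    using DERIV_atLeast_lower_bound[OF G_deriv, of "- L" x y]
      DERIV_atLeast_upper_bound[OF G_deriv, of L x y] L that by (auto simp: abs_le_iff)
  have "L \<ge> 0" using L[of t1] by auto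
  moreover have "\<bar>G x - G y\<bar> \<le> L * \<bar>x - y\<bar>" if "x \<ge> t1" "y \<ge> t1" for x y
    using that ordered[of x y] ordered[of y x] by (cases x y rule: le_cases) (auto simp: abs_minus_commute)
  ultimately show ?thesis by (rule that)
qed

lemma curve_lipschitz:
  obtains Lg where "Lg > 0" "\<And>x y. x \<ge> t1 \<Longrightarrow> y \<ge> t1 \<Longrightarrow> dist (curve x) (curve y) \<le> Lg * \<bar>x - y\<bar>"
proof -
  obtain L where L: "L \<ge> 0" "\<And>x y. x \<ge> t1 \<Longrightarrow> y \<ge> t1 \<Longrightarrow> \<bar>G x - G y\<bar> \<le> L * \<bar>x - y\<bar>"
    using G_lipschitz by blast
  obtain B where B: "\<And>t. t \<ge> t1 \<Longrightarrow> \<bar>G t\<bar> \<le> B" using G_bounded by blast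
  have "dist (curve x) (curve y) \<le> (2 * (L + B) + 1) * \<bar>x - y\<bar>" if xy: "x \<ge> t1" "y \<ge> t1" for x y
  proof -
    have "curve x - curve y = (G x * cos x - G y * cos y, \<sigma> * (G x * sin x - G y * sin y))"
      by (simp add: curve_def right_diff_distrib)
    then have "dist (curve x) (curve y) \<le> \<bar>G x * cos x - G y * cos y\<bar> + \<bar>G x * sin x - G y * sin y\<bar>"
      using norm_Pair_le[of "G x * cos x - G y * cos y" "\<sigma> * (G x * sin x - G y * sin y)"]
        abs_orientation by (simp add: dist_norm abs_mult)
    also have "\<dots> \<le> (L + B) * \<bar>x - y\<bar> + (L + B) * \<bar>x - y\<bar>"
      using abs_mult_diff_le[of G x y L B cos] abs_mult_diff_le[of G x y L B sin]
        L(2)[OF xy] B[OF xy(2)] abs_cos_diff_le abs_sin_diff_le by (simp add: add_mono)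
    finally show ?thesis by (simp add: algebra_simps)
  qed
  moreover have "2 * (L + B) + 1 > 0" using L(1) B[of t1] by simp
  ultimately show ?thesis by (rule that[rotated])
qed

lemma fmeasurable_eps_nbhd_spiral: "eps_nbhd spiral e \<in> fmeasurable lborel"
proof -
  obtain B where B: "\<And>t. t \<ge> t1 \<Longrightarrow> \<bar>G t\<bar> \<le> B" using G_bounded by blast
  have "norm b \<le> B" if "b \<in> spiral" for b
  proof -
    from that obtain t where "t \<in> {t1..}" "b = curve t" unfolding spiral_def by (rule imageE)
    then show ?thesis using B[of t] norm_curve[of t] by simp
  qed
  then show ?thesis by (rule fmeasurable_eps_nbhd)
qed

text \<open>Beyond angle \<open>T\<close> the spiral stays in the annulus of half-width \<open>dev T\<close>; up to angle \<open>T\<close>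
  it is covered by balls around a grid of mesh \<open>\<epsilon> / Lg\<close> on the angle axis.\<close>

lemma eps_nbhd_spiral_cover:
  assumes Lg: "Lg > 0" "\<And>x y. x \<ge> t1 \<Longrightarrow> y \<ge> t1 \<Longrightarrow> dist (curve x) (curve y) \<le> Lg * \<bar>x - y\<bar>"
    and e: "\<epsilon> > 0" and T: "T \<ge> t0"
  shows "eps_nbhd spiral \<epsilon> \<subseteq> (ball 0 (\<rho>0 + (dev T + \<epsilon>)) - cball 0 (\<rho>0 - (dev T + \<epsilon>))) \<union>
      (\<Union>k\<le>nat \<lceil>(T - t1) / (\<epsilon> / Lg)\<rceil>. ball (curve (t1 + real k * (\<epsilon> / Lg))) (2 * \<epsilon>))"
proof
  fix x assume "x \<in> eps_nbhd spiral \<epsilon>"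
  then obtain t where t: "t \<ge> t1" "dist (curve t) x < \<epsilon>" unfolding eps_nbhd_def spiral_def by auto
  show "x \<in> (ball 0 (\<rho>0 + (dev T + \<epsilon>)) - cball 0 (\<rho>0 - (dev T + \<epsilon>))) \<union>
      (\<Union>k\<le>nat \<lceil>(T - t1) / (\<epsilon> / Lg)\<rceil>. ball (curve (t1 + real k * (\<epsilon> / Lg))) (2 * \<epsilon>))"
  proof (cases "T \<le> t")
    case True
    have "\<bar>norm x - norm (curve t)\<bar> \<le> dist (curve t) x"
      using norm_triangle_ineq3[of x "curve t"] by (simp add: dist_norm norm_minus_commute)
    moreover have "\<bar>G t - \<rho>0\<bar> \<le> dev T"
      using dev_decreasing[OF T True] dev_eq_abs[OF t(1)] by simp
    ultimately have "\<bar>norm x - \<rho>0\<bar> < dev T + \<epsilon>" using t norm_curve[OF t(1)] by linarith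
    then show ?thesis by (auto simp: dist_norm abs_less_iff)
  next
    case False
    then obtain k where k: "k \<le> nat \<lceil>(T - t1) / (\<epsilon> / Lg)\<rceil>" "t1 \<le> t1 + real k * (\<epsilon> / Lg)"
      "\<bar>t1 + real k * (\<epsilon> / Lg) - t\<bar> \<le> \<epsilon> / Lg"
      using grid_point_near[of "\<epsilon> / Lg" t1 t T] e Lg t by auto
    have "dist (curve (t1 + real k * (\<epsilon> / Lg))) (curve t) \<le> Lg * (\<epsilon> / Lg)"
      using Lg(2)[OF k(2) t(1)] k(3) Lg(1) by (meson mult_left_mono order_trans less_imp_le)
    then have "dist (curve (t1 + real k * (\<epsilon> / Lg))) x < 2 * \<epsilon>"
      using t(2) Lg(1) dist_triangle[of "curve (t1 + real k * (\<epsilon> / Lg))" x "curve t"] by simp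
    then show ?thesis using k(1) by auto
  qed
qed

lemma eps_nbhd_area_le:
  obtains Lg where "Lg > 0" "\<And>\<epsilon> T. 0 < \<epsilon> \<Longrightarrow> t0 \<le> T \<Longrightarrow> dev T + \<epsilon> < \<rho>0 \<Longrightarrow>
     measure lborel (eps_nbhd spiral \<epsilon>) \<le> 4 * pi * \<rho>0 * (dev T + \<epsilon>) + 4 * pi * \<epsilon>\<^sup>2 * ((T - t1) * Lg / \<epsilon> + 2)"
proof -
  obtain Lg where Lg: "Lg > 0" "\<And>x y. x \<ge> t1 \<Longrightarrow> y \<ge> t1 \<Longrightarrow> dist (curve x) (curve y) \<le> Lg * \<bar>x - y\<bar>"
    using curve_lipschitz by blast
  have "measure lborel (eps_nbhd spiral \<epsilon>) \<le> 4 * pi * \<rho>0 * (dev T + \<epsilon>) + 4 * pi * \<epsilon>\<^sup>2 * ((T - t1) * Lg / \<epsilon> + 2)"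
    if e: "0 < \<epsilon>" and T: "t0 \<le> T" and w: "dev T + \<epsilon> < \<rho>0" for \<epsilon> T
  proof -
    define w where "w = dev T + \<epsilon>"
    define N where "N = nat \<lceil>(T - t1) / (\<epsilon> / Lg)\<rceil>"
    define R where "R = ball (0::real \<times> real) (\<rho>0 + w) - cball 0 (\<rho>0 - w)"
    define Bs where "Bs = (\<Union>k\<le>N. ball (curve (t1 + real k * (\<epsilon> / Lg))) (2 * \<epsilon>))"
    have w0: "w > 0" "w < \<rho>0" using dev_pos_t0[OF T] e w by (auto simp: w_def)
    have fin: "R \<union> Bs \<in> fmeasurable lborel"
      by (intro fmeasurableI emeasure_bounded_finite) (auto simp: R_def Bs_def)
    have "measure lborel (eps_nbhd spiral \<epsilon>) \<le> measure lborel (R \<union> Bs)"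
      using eps_nbhd_spiral_cover[OF Lg e T]
      by (intro measure_mono_fmeasurable[OF _ _ fin]) (simp_all add: open_eps_nbhd R_def Bs_def N_def w_def)
    also have "\<dots> \<le> measure lborel R + measure lborel Bs"
      by (rule measure_Un_le) (auto simp: R_def Bs_def)
    also have "measure lborel Bs \<le> (\<Sum>k\<le>N. measure lborel (ball (curve (t1 + real k * (\<epsilon> / Lg))) (2 * \<epsilon>)))"
      unfolding Bs_def by (rule measure_UNION_le) auto
    also have "\<dots> = real (Suc N) * (4 * pi * \<epsilon>\<^sup>2)"
      using e by (simp add: measure_ball_real2 power_mult_distrib)
    also have "measure lborel R = 4 * pi * \<rho>0 * w"
      using measure_annulus[of "\<rho>0 - w" "\<rho>0 + w"] w0
      by (simp add: R_def power2_eq_square algebra_simps)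
    also have "real (Suc N) \<le> (T - t1) * Lg / \<epsilon> + 2"
    proof -
      have "real N \<le> (T - t1) / (\<epsilon> / Lg) + 1"
        using T t1_le_t0 e Lg(1) by (simp add: N_def)
      then show ?thesis using e Lg(1) by simp
    qed
    finally show ?thesis by (simp add: w_def mult_right_mono mult.commute)
  qed
  then show ?thesis using Lg(1) that by blast
qed

lemma eps_nbhd_area_le_powr:
  assumes d: "d \<le> 1 / real m"
  obtains C where "\<And>\<epsilon> T. 0 < \<epsilon> \<Longrightarrow> \<epsilon> < 1 \<Longrightarrow> t0 \<le> T \<Longrightarrow> dev T + \<epsilon> < \<rho>0 \<Longrightarrow>
    dev T \<le> Cu * \<epsilon> powr (1 / real m) \<Longrightarrow> T \<le> Ct * \<epsilon> powr (d - 1) \<Longrightarrow>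
    measure lborel (eps_nbhd spiral \<epsilon>) \<le> C * \<epsilon> powr d"
proof -
  obtain Lg where Lg: "Lg > 0" "\<And>\<epsilon> T. 0 < \<epsilon> \<Longrightarrow> t0 \<le> T \<Longrightarrow> dev T + \<epsilon> < \<rho>0 \<Longrightarrow>
      measure lborel (eps_nbhd spiral \<epsilon>) \<le> 4 * pi * \<rho>0 * (dev T + \<epsilon>) + 4 * pi * \<epsilon>\<^sup>2 * ((T - t1) * Lg / \<epsilon> + 2)"
    using eps_nbhd_area_le by blast
  define C where "C = 4 * pi * \<rho>0 * (\<bar>Cu\<bar> + 1) + 4 * pi * Lg * (\<bar>Ct\<bar> + \<bar>t1\<bar>) + 8 * pi"
  have "measure lborel (eps_nbhd spiral \<epsilon>) \<le> C * \<epsilon> powr d"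
    if e: "0 < \<epsilon>" "\<epsilon> < 1" and T: "t0 \<le> T" "dev T + \<epsilon> < \<rho>0"
      "dev T \<le> Cu * \<epsilon> powr (1 / real m)" "T \<le> Ct * \<epsilon> powr (d - 1)" for \<epsilon> T
  proof -
    have le_d: "\<epsilon> powr x \<le> \<epsilon> powr d" if "d \<le> x" for x
      using powr_mono'[OF that] e by simp
    have "1 / real m \<le> 1" using order_pos by simp
    then have "\<epsilon> powr 1 \<le> \<epsilon> powr d" "\<epsilon> powr 2 \<le> \<epsilon> powr d" using d le_d[of 1] le_d[of 2] by linarith+
    then have eps: "\<epsilon> \<le> \<epsilon> powr d" "\<epsilon>\<^sup>2 \<le> \<epsilon> powr d" using e by (simp_all add: powr_numeral)
    have A: "dev T + \<epsilon> \<le> (\<bar>Cu\<bar> + 1) * \<epsilon> powr d"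
      using T(3) eps(1) mult_mono[OF abs_ge_self le_d[OF d] abs_ge_zero powr_ge_zero, of Cu]
      by (simp add: distrib_right)
    have "\<epsilon> * T \<le> \<epsilon> * (Ct * \<epsilon> powr (d - 1))" using T(4) e by (simp add: mult_left_mono)
    also have "\<dots> = Ct * \<epsilon> powr d" using e powr_add[of \<epsilon> 1 "d - 1"] by simp
    moreover have "- t1 * \<epsilon> \<le> \<bar>t1\<bar> * \<epsilon>" using e by (intro mult_right_mono) auto
    ultimately have "\<epsilon> * T - t1 * \<epsilon> \<le> Ct * \<epsilon> powr d + \<bar>t1\<bar> * \<epsilon>" by simp
    also have "\<dots> \<le> (\<bar>Ct\<bar> + \<bar>t1\<bar>) * \<epsilon> powr d"
      using mult_right_mono[OF abs_ge_self powr_ge_zero, of Ct \<epsilon> d]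
        mult_left_mono[OF eps(1) abs_ge_zero, of t1] by (simp add: distrib_right)
    finally have B: "\<epsilon> * (T - t1) \<le> (\<bar>Ct\<bar> + \<bar>t1\<bar>) * \<epsilon> powr d" by (simp add: algebra_simps)
    have "4 * pi * \<epsilon>\<^sup>2 * ((T - t1) * Lg / \<epsilon> + 2) = 4 * pi * Lg * (\<epsilon> * (T - t1)) + 8 * pi * \<epsilon>\<^sup>2"
      using e by (simp add: field_simps power2_eq_square)
    then have "measure lborel (eps_nbhd spiral \<epsilon>)
        \<le> 4 * pi * \<rho>0 * (dev T + \<epsilon>) + (4 * pi * Lg * (\<epsilon> * (T - t1)) + 8 * pi * \<epsilon>\<^sup>2)"
      using Lg(2)[OF e(1) T(1,2)] by simp
    also have "\<dots> \<le> 4 * pi * \<rho>0 * ((\<bar>Cu\<bar> + 1) * \<epsilon> powr d)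
        + (4 * pi * Lg * ((\<bar>Ct\<bar> + \<bar>t1\<bar>) * \<epsilon> powr d) + 8 * pi * \<epsilon> powr d)"
    proof -
      have "4 * pi * \<rho>0 * (dev T + \<epsilon>) \<le> 4 * pi * \<rho>0 * ((\<bar>Cu\<bar> + 1) * \<epsilon> powr d)"
        by (rule mult_left_mono[OF A]) (use pos_radius in simp)
      moreover have "4 * pi * Lg * (\<epsilon> * (T - t1)) \<le> 4 * pi * Lg * ((\<bar>Ct\<bar> + \<bar>t1\<bar>) * \<epsilon> powr d)"
        by (rule mult_left_mono[OF B]) (use Lg(1) in simp)
      moreover have "8 * pi * \<epsilon>\<^sup>2 \<le> 8 * pi * \<epsilon> powr d" by (rule mult_left_mono[OF eps(2)]) simp
      ultimately show ?thesis by linarith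
    qed
    also have "\<dots> = C * \<epsilon> powr d" by (simp add: C_def algebra_simps)
    finally show ?thesis .
  qed
  then show ?thesis by (rule that)
qed

lemma eps_nbhd_area_upper:
  assumes threshold: "\<forall>\<^sub>F \<epsilon> in at_right 0. \<exists>T\<ge>t0. dev T \<le> Cu * \<epsilon> powr (1 / real m) \<and>
      T \<le> Ct * \<epsilon> powr (1 / real m - 1 - a)"
    and a: "a \<ge> 0"
  obtains C where "\<forall>\<^sub>F \<epsilon> in at_right 0. measure lborel (eps_nbhd spiral \<epsilon>) \<le> C * \<epsilon> powr (1 / real m - a)"
proof -
  obtain C where C: "\<And>\<epsilon> T. 0 < \<epsilon> \<Longrightarrow> \<epsilon> < 1 \<Longrightarrow> t0 \<le> T \<Longrightarrow> dev T + \<epsilon> < \<rho>0 \<Longrightarrow>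
      dev T \<le> Cu * \<epsilon> powr (1 / real m) \<Longrightarrow> T \<le> Ct * \<epsilon> powr ((1 / real m - a) - 1) \<Longrightarrow>
      measure lborel (eps_nbhd spiral \<epsilon>) \<le> C * \<epsilon> powr (1 / real m - a)"
    using eps_nbhd_area_le_powr[of "1 / real m - a"] a by auto
  have "\<forall>\<^sub>F \<epsilon> in at_right 0. Cu * \<epsilon> powr (1 / real m) + \<epsilon> < \<rho>0"
  proof -
    have "((\<lambda>\<epsilon>. Cu * \<epsilon> powr (1 / real m) + \<epsilon>) \<longlongrightarrow> 0 + 0) (at_right 0)"
      using order_pos by (intro tendsto_add tendsto_powr_at_right_0 tendsto_ident_at) auto
    then show ?thesis using pos_radius by (intro order_tendstoD(2)) auto
  qed
  moreover have "\<forall>\<^sub>F \<epsilon> in at_right 0. \<epsilon> \<in> {0<..<1::real}"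
    by (rule eventually_at_right_real) simp
  ultimately have "\<forall>\<^sub>F \<epsilon> in at_right 0. measure lborel (eps_nbhd spiral \<epsilon>) \<le> C * \<epsilon> powr (1 / real m - a)"
    using threshold
  proof eventually_elim
    case (elim \<epsilon>)
    have "1 / real m - 1 - a = (1 / real m - a) - 1" by simp
    then obtain T where "t0 \<le> T" "dev T \<le> Cu * \<epsilon> powr (1 / real m)"
      "T \<le> Ct * \<epsilon> powr ((1 / real m - a) - 1)"
      using elim(3) by metis
    with elim(1,2) show ?case by (intro C) auto
  qed
  then show ?thesis by (rule that)
qed

lemma dev_level_crossing:
  assumes "\<psi> \<ge> t0" "d > 0" "dev \<psi> > d"
  obtains j :: nat where "dev (\<psi> + 2 * pi * j) > d" "dev (\<psi> + 2 * pi * j + 2 * pi) \<le> d"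
proof -
  have "\<exists>j::nat. dev (\<psi> + 2 * pi * j) \<le> d"
  proof -
    have "\<forall>\<^sub>F t in at_top. dev t < d" using dev_tendsto_0 assms(2) by (intro order_tendstoD) auto
    then obtain T where T: "\<And>t. t \<ge> T \<Longrightarrow> dev t < d" unfolding eventually_at_top_linorder by blast
    obtain j :: nat where "(T - \<psi>) / (2 * pi) < j" using reals_Archimedean2 by blast
    then have "T \<le> \<psi> + 2 * pi * j" by (simp add: field_simps)
    then show ?thesis using T less_imp_le by blast
  qed
  then obtain j where j: "dev (\<psi> + 2 * pi * Suc j) \<le> d" "\<not> dev (\<psi> + 2 * pi * j) \<le> d"
    using exists_least_lemma[of "\<lambda>j. dev (\<psi> + 2 * pi * j) \<le> d"] assms(3) by auto
  then show ?thesis by (intro that[of j]) (auto simp: algebra_simps)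
qed

lemma dev_near_level_on_ray:
  assumes e: "\<epsilon> > 0" and ts: "ts \<ge> t0" and small_drop: "2 * pi * c2 * dev ts ^ m \<le> \<epsilon>"
    and \<psi>: "\<psi> \<ge> ts" and d: "d > 0" "dev \<psi> > d"
  obtains k :: nat where "\<bar>dev (\<psi> + 2 * pi * k) - d\<bar> < \<epsilon>"
proof -
  obtain j :: nat where j: "dev (\<psi> + 2 * pi * j) > d" "dev (\<psi> + 2 * pi * j + 2 * pi) \<le> d"
    using dev_level_crossing[of \<psi> d] \<psi> ts d by auto
  define a where "a = \<psi> + 2 * pi * j"
  have "2 * pi * real j \<ge> 0" by simp
  then have a: "a \<ge> ts" using \<psi> unfolding a_def by linarith
  have "dev a - dev (a + 2 * pi) \<le> 2 * pi * c2 * dev a ^ m" using dev_drop_per_turn a ts by simp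
  also have "\<dots> \<le> 2 * pi * c2 * dev ts ^ m"
    using dev_decreasing[of ts a] dev_pos_t0[of a] a ts c2_pos by (auto intro!: mult_left_mono power_mono)
  finally have drop: "dev a - dev (a + 2 * pi) \<le> \<epsilon>" using small_drop by simp
  have ja: "dev a > d" "dev (a + 2 * pi) \<le> d" "a + 2 * pi = \<psi> + 2 * pi * real (Suc j)"
    using j by (simp_all add: a_def algebra_simps)
  show ?thesis
  proof (cases "dev a - d \<le> \<epsilon> / 2")
    case True
    then show ?thesis using that[of j] ja e by (auto simp: a_def)
  next
    case False
    then show ?thesis using that[of "Suc j"] ja drop by auto
  qed
qed

lemma annulus_subset_eps_nbhd:
  assumes e: "\<epsilon> > 0" and ts: "ts \<ge> t0" and small_drop: "2 * pi * c2 * dev ts ^ m \<le> \<epsilon>"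
    and p: "\<bar>norm p - \<rho>0\<bar> < dev (ts + 2 * pi)" "side * (norm p - \<rho>0) > 0"
  shows "p \<in> eps_nbhd spiral \<epsilon>"
proof -
  define r where "r = norm p"
  define d where "d = \<bar>r - \<rho>0\<bar>"
  have d0: "d > 0" using p(2) by (auto simp: d_def r_def)
  have sd: "r - \<rho>0 = side * d" using p(2) side_cases by (auto simp: d_def r_def)
  obtain \<theta> where "p = (norm p * cos \<theta>, norm p * sin \<theta>)" using polar_form_exists by blast
  then have \<theta>: "p = (r * cos \<theta>, r * sin \<theta>)" by (simp add: r_def)
  obtain \<psi> where \<psi>: "ts \<le> \<psi>" "\<psi> \<le> ts + 2 * pi" "cos \<psi> = cos (\<sigma> * \<theta>)" "sin \<psi> = sin (\<sigma> * \<theta>)"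
    using angle_in_turn by blast
  have "dev (ts + 2 * pi) \<le> dev \<psi>" using \<psi> ts by (intro dev_decreasing) auto
  then obtain k :: nat where k: "\<bar>dev (\<psi> + 2 * pi * k) - d\<bar> < \<epsilon>"
    using dev_near_level_on_ray[OF e ts small_drop \<psi>(1) d0] p(1) by (auto simp: d_def r_def)
  define t' where "t' = \<psi> + 2 * pi * k"
  have "\<exists>n::int. t' = \<psi> + 2 * pi * n" by (intro exI[of _ "int k"]) (simp add: t'_def)
  then have "cos t' = cos \<psi> \<and> sin t' = sin \<psi>" using sin_cos_eq_iff by blast
  then have angle: "cos t' = cos \<theta>" "\<sigma> * sin t' = sin \<theta>" using \<psi> orientation by auto
  have "2 * pi * real k \<ge> 0" by simp
  then have "t' \<ge> t1" using \<psi> ts t1_le_t0 unfolding t'_def by linarith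
  moreover have "curve t' - p = ((G t' - r) * cos \<theta>, (G t' - r) * sin \<theta>)"
    using angle \<theta> by (simp add: curve_def algebra_simps)
  then have "dist (curve t') p = \<bar>G t' - r\<bar>" by (simp add: dist_norm norm_polar)
  moreover have "G t' - r = side * (dev t' - d)" using G_eq_dev[of t'] sd by (simp add: algebra_simps)
  then have "\<bar>G t' - r\<bar> = \<bar>dev t' - d\<bar>" using side_cases by (auto simp: abs_mult)
  ultimately show ?thesis using k unfolding eps_nbhd_def spiral_def t'_def[symmetric] by force
qed

lemma dev_attains:
  assumes "0 < y" "y \<le> dev t0"
  obtains ts where "ts \<ge> t0" "dev ts = y"
proof -
  have "\<forall>\<^sub>F t in at_top. dev t < y" using dev_tendsto_0 assms(1) by (intro order_tendstoD) auto
  then obtain T where T: "\<And>t. t \<ge> T \<Longrightarrow> dev t < y" unfolding eventually_at_top_linorder by blast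
  have "dev (max T t0) \<le> y" using T[of "max T t0"] by simp
  then obtain ts where "t0 \<le> ts" "dev ts = y"
    using IVT2'[of dev "max T t0" y t0] assms(2) t1_le_t0
      continuous_on_subset[OF dev_continuous_on, of "{t0..max T t0}"] by auto
  then show ?thesis by (rule that)
qed

lemma eps_nbhd_area_ge_dev:
  assumes ts: "ts \<ge> t0" and e: "\<epsilon> > 0" and small_drop: "2 * pi * c2 * dev ts ^ m \<le> \<epsilon>"
  shows "pi * \<rho>0 * exp (- 2 * pi * c2) * dev ts \<le> measure lborel (eps_nbhd spiral \<epsilon>)"
proof -
  define w where "w = dev (ts + 2 * pi)"
  have w: "exp (- 2 * pi * c2) * dev ts \<le> w" using dev_ratio_per_turn[OF ts] by (simp add: w_def)
  have "ts + 2 * pi \<ge> t0" using ts pi_gt_zero by linarith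
  then have w_bounds: "0 < w" "w \<le> \<rho>0"
    using dev_pos_t0 dev_decreasing[of t0 "ts + 2 * pi"] decay_bounds[of t0] pos_radius
    by (auto simp: w_def)
  define A where "A = {p :: real \<times> real. 0 < side * (norm p - \<rho>0) \<and> \<bar>norm p - \<rho>0\<bar> < w}"
  have "A \<subseteq> eps_nbhd spiral \<epsilon>"
    using annulus_subset_eps_nbhd[OF e ts small_drop] by (auto simp: A_def w_def)
  have "pi * \<rho>0 * exp (- 2 * pi * c2) * dev ts \<le> pi * \<rho>0 * w"
    using w pos_radius by (simp add: mult.assoc)
  also have "\<dots> \<le> measure lborel A"
    unfolding A_def by (rule measure_one_sided_annulus(2)[OF side_cases w_bounds])
  also have "\<dots> \<le> measure lborel (eps_nbhd spiral \<epsilon>)"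
    using \<open>A \<subseteq> eps_nbhd spiral \<epsilon>\<close> measure_one_sided_annulus(1)[OF side_cases w_bounds]
    by (intro measure_mono_fmeasurable[OF _ _ fmeasurable_eps_nbhd_spiral]) (simp_all add: A_def)
  finally show ?thesis .
qed

lemma eps_nbhd_area_lower:
  obtains \<kappa> where "\<kappa> > 0" "\<forall>\<^sub>F \<epsilon> in at_right 0. \<kappa> * \<epsilon> powr (1 / real m) \<le> measure lborel (eps_nbhd spiral \<epsilon>)"
proof -
  define C where "C = 2 * pi * c2"
  define \<kappa> where "\<kappa> = pi * \<rho>0 * exp (- 2 * pi * c2) / C powr (1 / real m)"
  have C0: "C > 0" using c2_pos by (simp add: C_def)
  have lower: "\<kappa> * \<epsilon> powr (1 / real m) \<le> measure lborel (eps_nbhd spiral \<epsilon>)"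
    if e: "0 < \<epsilon>" "\<epsilon> < C * dev t0 ^ m" for \<epsilon>
  proof -
    define y where "y = (\<epsilon> / C) powr (1 / real m)"
    have y0: "y > 0" using e C0 by (simp add: y_def)
    have "y ^ m = y powr real m" using y0 by (simp add: powr_realpow)
    also have "\<dots> = \<epsilon> / C" using order_pos e C0 by (simp add: y_def powr_powr)
    finally have ym: "y ^ m = \<epsilon> / C" .
    have "\<epsilon> / C \<le> dev t0 ^ m" using e C0 by (simp add: divide_le_eq mult.commute)
    then have "y \<le> (dev t0 ^ m) powr (1 / real m)"
      unfolding y_def using e C0 by (intro powr_mono2) auto
    also have "(dev t0 ^ m) powr (1 / real m) = dev t0"
      using dev_pos_t0[of t0] order_pos by (simp add: powr_realpow[symmetric] powr_powr)
    finally obtain ts where ts: "ts \<ge> t0" "dev ts = y" using dev_attains y0 by blast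
    have "C * dev ts ^ m = \<epsilon>" using ym ts(2) C0 by simp
    then have "2 * pi * c2 * dev ts ^ m \<le> \<epsilon>" by (simp add: C_def)
    from eps_nbhd_area_ge_dev[OF ts(1) e(1) this] show ?thesis
      using C0 e ts(2) by (simp add: \<kappa>_def y_def powr_divide)
  qed
  have "C * dev t0 ^ m > 0" using C0 dev_pos_t0[of t0] by simp
  then have "\<forall>\<^sub>F \<epsilon> in at_right 0. \<epsilon> \<in> {0<..<C * dev t0 ^ m}"
    by (rule eventually_at_right_real)
  then have "\<forall>\<^sub>F \<epsilon> in at_right 0. \<kappa> * \<epsilon> powr (1 / real m) \<le> measure lborel (eps_nbhd spiral \<epsilon>)"
    by eventually_elim (use lower in auto)
  moreover have "\<kappa> > 0" using pos_radius C0 by (simp add: \<kappa>_def)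
  ultimately show ?thesis using that by blast
qed

lemma has_box_dim_spiralI:
  assumes threshold: "\<And>a. a > 0 \<Longrightarrow> \<exists>Cu Ct. \<forall>\<^sub>F \<epsilon> in at_right 0. \<exists>T\<ge>t0.
      dev T \<le> Cu * \<epsilon> powr (1 / real m) \<and> T \<le> Ct * \<epsilon> powr (1 / real m - 1 - a)"
  shows "has_box_dim spiral (2 - 1 / real m)"
proof (rule has_box_dimI)
  fix s assume s: "s > 2 - 1 / real m"
  define a where "a = (s - (2 - 1 / real m)) / 2"
  have a: "a > 0" using s by (simp add: a_def)
  obtain Cu Ct where "\<forall>\<^sub>F \<epsilon> in at_right 0. \<exists>T\<ge>t0.
      dev T \<le> Cu * \<epsilon> powr (1 / real m) \<and> T \<le> Ct * \<epsilon> powr (1 / real m - 1 - a)"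
    using threshold[OF a] by blast
  then obtain C where "\<forall>\<^sub>F \<epsilon> in at_right 0. measure lborel (eps_nbhd spiral \<epsilon>) \<le> C * \<epsilon> powr (1 / real m - a)"
    by (rule eps_nbhd_area_upper[OF _ less_imp_le[OF a]])
  then show "((\<lambda>\<epsilon>. measure lborel (eps_nbhd spiral \<epsilon>) / \<epsilon> powr (2 - s)) \<longlongrightarrow> 0) (at_right 0)"
    by (rule powr_ratio_tendsto_0) (use s in \<open>auto simp: a_def field_simps\<close>)
next
  fix s assume s: "s < 2 - 1 / real m"
  obtain \<kappa> where "\<kappa> > 0"
    "\<forall>\<^sub>F \<epsilon> in at_right 0. \<kappa> * \<epsilon> powr (1 / real m) \<le> measure lborel (eps_nbhd spiral \<epsilon>)"
    using eps_nbhd_area_lower by blast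
  then show "\<forall>\<^sub>F \<epsilon> in at_right 0. 1 \<le> measure lborel (eps_nbhd spiral \<epsilon>) / \<epsilon> powr (2 - s)"
    by (rule powr_ratio_eventually_ge_1) (use s in simp)
qed

lemma dev_threshold_power:
  assumes m1: "m > 1" and a: "a > 0"
  shows "\<exists>Cu Ct. \<forall>\<^sub>F \<epsilon> in at_right 0. \<exists>T\<ge>t0.
      dev T \<le> Cu * \<epsilon> powr (1 / real m) \<and> T \<le> Ct * \<epsilon> powr (1 / real m - 1 - a)"
proof -
  obtain k1 k2 where "\<forall>\<^sub>F \<phi> in at_top. k1 * \<bar>\<phi>\<bar> powr (- 1 / (real m - 1)) \<le> \<bar>G \<phi> - \<rho>0\<bar> \<and>
      \<bar>G \<phi> - \<rho>0\<bar> \<le> k2 * \<bar>\<phi>\<bar> powr (- 1 / (real m - 1))"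
    using comparable_power_spiral[OF m1] unfolding comparable_def by blast
  then obtain Tc where Tc: "\<And>t. t \<ge> Tc \<Longrightarrow> \<bar>G t - \<rho>0\<bar> \<le> k2 * \<bar>t\<bar> powr (- 1 / (real m - 1))"
    unfolding eventually_at_top_linorder by blast
  define r where "r = 1 / real m - 1"
  have "r < 0" using m1 by (simp add: r_def)
  then have "\<forall>\<^sub>F \<epsilon> in at_right 0. max (max Tc t0) 1 \<le> \<epsilon> powr r"
    using filterlim_powr_neg_at_right_0 unfolding filterlim_at_top by blast
  moreover have "\<forall>\<^sub>F \<epsilon> in at_right 0. \<epsilon> \<in> {0<..<1::real}"
    by (rule eventually_at_right_real) simp
  ultimately have "\<forall>\<^sub>F \<epsilon> in at_right 0. \<exists>T\<ge>t0.
      dev T \<le> k2 * \<epsilon> powr (1 / real m) \<and> T \<le> 1 * \<epsilon> powr (1 / real m - 1 - a)"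
  proof eventually_elim
    case (elim \<epsilon>)
    define T where "T = \<epsilon> powr r"
    have T: "T \<ge> Tc" "T \<ge> t0" "T \<ge> 1" using elim by (auto simp: T_def)
    have "dev T = \<bar>G T - \<rho>0\<bar>" using dev_eq_abs[of T] T t1_le_t0 by simp
    also have "\<dots> \<le> k2 * \<bar>T\<bar> powr (- 1 / (real m - 1))" using Tc[OF T(1)] .
    also have "\<bar>T\<bar> powr (- 1 / (real m - 1)) = \<epsilon> powr (r * (- 1 / (real m - 1)))"
      using T by (simp add: T_def powr_powr)
    also have "r * (- 1 / (real m - 1)) = 1 / real m" using m1 by (simp add: r_def field_simps)
    finally have "dev T \<le> k2 * \<epsilon> powr (1 / real m)" .
    moreover have "T \<le> \<epsilon> powr (r - a)" unfolding T_def by (rule powr_mono') (use a elim in auto)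
    ultimately show ?case using T by (intro exI[of _ T]) (simp add: r_def)
  qed
  then show ?thesis by blast
qed

lemma has_box_dim_spiral_power: "m > 1 \<Longrightarrow> has_box_dim spiral (2 - 1 / real m)"
  by (intro has_box_dim_spiralI dev_threshold_power)

end

locale spiral_tail_simple = spiral_tail_decay +
  fixes M Dd :: real
  assumes simple_zero: "m = 1"
    and second_order: "\<And>x. \<bar>x - \<rho>0\<bar> \<le> \<delta> \<Longrightarrow> \<bar>f x - Dd * (x - \<rho>0)\<bar> \<le> M * (x - \<rho>0)\<^sup>2"
begin

lemma dev_exp_decay:
  assumes t: "t \<ge> t0"
  shows "dev t \<le> dev t0 * exp (- c1 * (t - t0))"
proof -
  have "dev_deriv s / dev s \<le> - c1" if s: "s \<ge> t0" for s
    using decay_bounds[OF s] dev_pos_t0[OF s] simple_zero by (simp add: field_simps)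
  then have "ln (dev t) \<le> ln (dev t0) + - c1 * (t - t0)"
    using t by (intro DERIV_atLeast_upper_bound[OF ln_dev_has_derivative]) auto
  then have "exp (ln (dev t)) \<le> exp (ln (dev t0) + - c1 * (t - t0))" by simp
  also have "\<dots> = exp (ln (dev t0)) * exp (- c1 * (t - t0))" by (rule exp_add)
  finally show ?thesis using dev_pos_t0[OF t] dev_pos_t0[of t0] by simp
qed

text \<open>For a simple zero the logarithmic derivative of \<open>dev\<close> equals \<open>- \<sigma> \<rho>0 f'(\<rho>0)\<close> up to an
  error of order \<open>dev\<close>, by the second order Taylor expansion of \<open>f\<close>.\<close>

lemma log_dev_deriv_estimate:
  assumes s: "s \<ge> t0"
  shows "\<bar>dev_deriv s / dev s + \<sigma> * (\<rho>0 * Dd)\<bar> \<le> (\<bar>Dd\<bar> + 2 * \<rho>0 * \<bar>M\<bar>) * dev s"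
proof -
  define u where "u = G s - \<rho>0"
  define R where "R = f (G s) - Dd * u"
  have u: "dev s = \<bar>u\<bar>" "dev s = side * u"
    using dev_eq_abs[of s] s t1_le_t0 by (simp_all add: u_def dev_def)
  have u0: "u \<noteq> 0" using u dev_pos_t0[OF s] by auto
  have "\<bar>R\<bar> \<le> M * u\<^sup>2" using second_order[of "G s"] decay_bounds[OF s] u(1) by (simp add: R_def u_def)
  also have "\<dots> \<le> \<bar>M\<bar> * u\<^sup>2" by (rule mult_right_mono) auto
  finally have R: "\<bar>R\<bar> / \<bar>u\<bar> \<le> \<bar>M\<bar> * \<bar>u\<bar>" using u0 by (simp add: field_simps power2_eq_square)
  have "\<bar>u\<bar> \<le> \<rho>0 / 2" using decay_bounds[OF s] u(1) by simp
  moreover have "G s - \<rho>0 \<le> \<bar>u\<bar>" by (simp add: u_def)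
  ultimately have G: "0 \<le> G s" "G s \<le> 2 * \<rho>0"
    using G_pos[of s] s t1_le_t0 pos_radius by auto
  have "dev_deriv s / dev s = \<sigma> * (- G s * f (G s)) / u"
    using side_cases by (auto simp: u(2) dev_deriv_def)
  also have "\<dots> = - \<sigma> * (u * Dd + G s * R / u) - \<sigma> * (\<rho>0 * Dd)"
    using u0 by (simp add: R_def u_def field_simps)
  finally have "\<bar>dev_deriv s / dev s + \<sigma> * (\<rho>0 * Dd)\<bar> = \<bar>u * Dd + G s * R / u\<bar>"
    using abs_orientation by (simp add: abs_mult)
  also have "\<dots> \<le> \<bar>u\<bar> * \<bar>Dd\<bar> + G s * (\<bar>R\<bar> / \<bar>u\<bar>)"
    using abs_triangle_ineq[of "u * Dd" "G s * R / u"] G by (simp add: abs_mult abs_divide)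
  also have "G s * (\<bar>R\<bar> / \<bar>u\<bar>) \<le> 2 * \<rho>0 * (\<bar>M\<bar> * \<bar>u\<bar>)" using G R by (intro mult_mono) auto
  finally show ?thesis using u(1) by (simp add: algebra_simps)
qed

lemma comparable_exp_spiral: "comparable G \<rho>0 (\<lambda>\<phi>. exp (- (\<sigma> * (\<rho>0 * Dd)) * \<phi>)) at_top"
proof -
  define \<beta> where "\<beta> = \<sigma> * (\<rho>0 * Dd)"
  define q where "q s = ln (dev s) + \<beta> * s" for s
  define B where "B = (\<bar>Dd\<bar> + 2 * \<rho>0 * \<bar>M\<bar>) * dev t0 / c1"
  have var: "\<bar>q t - q t0\<bar> \<le> B" if t: "t \<ge> t0" for t
    unfolding B_def
  proof (rule DERIV_exp_bound_imp_bounded_variation[OF _ _ c1_pos t])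
    show "(q has_real_derivative dev_deriv s / dev s + \<beta>) (at s within {t0..})" if "s \<ge> t0" for s
      unfolding q_def using DERIV_add[OF ln_dev_has_derivative[OF that] DERIV_cmult[OF DERIV_ident, of \<beta>]]
      by simp
    show "\<bar>dev_deriv s / dev s + \<beta>\<bar> \<le> (\<bar>Dd\<bar> + 2 * \<rho>0 * \<bar>M\<bar>) * dev t0 * exp (- c1 * (s - t0))"
      if "s \<ge> t0" for s
    proof -
      have "0 \<le> \<bar>Dd\<bar> + 2 * \<rho>0 * \<bar>M\<bar>" using pos_radius by simp
      then have "(\<bar>Dd\<bar> + 2 * \<rho>0 * \<bar>M\<bar>) * dev s \<le> (\<bar>Dd\<bar> + 2 * \<rho>0 * \<bar>M\<bar>) * (dev t0 * exp (- c1 * (s - t0)))"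
        by (rule mult_left_mono[OF dev_exp_decay[OF that]])
      from order_trans[OF log_dev_deriv_estimate[OF that] this] show ?thesis
        by (simp only: \<beta>_def mult.assoc)
    qed
  qed
  have eq: "\<bar>G t - \<rho>0\<bar> = exp (q t) * exp (- \<beta> * t)" if "t \<ge> t0" for t
    using dev_pos_t0[OF that] dev_eq_abs[of t] that t1_le_t0 by (simp add: q_def flip: exp_add)
  have "exp (q t0 - B) * exp (- \<beta> * t) \<le> \<bar>G t - \<rho>0\<bar> \<and>
      \<bar>G t - \<rho>0\<bar> \<le> exp (q t0 + B) * exp (- \<beta> * t)" if "t \<ge> t0" for t
    using var[OF that] eq[OF that] by (simp add: abs_le_iff)
  then show ?thesis
    unfolding comparable_def eventually_at_top_linorder \<beta>_def[symmetric]
    by (intro exI[of _ "exp (q t0 - B)"] exI[of _ "exp (q t0 + B)"] conjI exI[of _ t0]) simp_all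
qed

lemma dev_threshold_exp:
  assumes a: "a > 0"
  shows "\<exists>Cu Ct. \<forall>\<^sub>F \<epsilon> in at_right 0. \<exists>T\<ge>t0.
      dev T \<le> Cu * \<epsilon> powr (1 / real m) \<and> T \<le> Ct * \<epsilon> powr (1 / real m - 1 - a)"
proof -
  have "\<forall>\<^sub>F \<epsilon> in at_right 0. \<epsilon> \<in> {0<..<1::real}" by (rule eventually_at_right_real) simp
  then have "\<forall>\<^sub>F \<epsilon> in at_right 0. \<exists>T\<ge>t0.
      dev T \<le> dev t0 * \<epsilon> powr (1 / real m) \<and> T \<le> (\<bar>t0\<bar> + 2 / (c1 * a)) * \<epsilon> powr (1 / real m - 1 - a)"
  proof eventually_elim
    case (elim \<epsilon>)
    then have e: "0 < \<epsilon>" "\<epsilon> < 1" by auto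
    define T where "T = t0 - 2 / c1 * ln \<epsilon>"
    have "2 / c1 * ln \<epsilon> \<le> 0" using e c1_pos by (intro mult_nonneg_nonpos) auto
    then have T0: "T \<ge> t0" by (simp add: T_def)
    have "dev T \<le> dev t0 * exp (- c1 * (T - t0))" by (rule dev_exp_decay[OF T0])
    also have "- c1 * (T - t0) = ln \<epsilon> + ln \<epsilon>" using c1_pos by (simp add: T_def)
    also have "exp (ln \<epsilon> + ln \<epsilon>) = \<epsilon> * \<epsilon>" by (simp only: exp_add exp_ln[OF e(1)])
    also have "dev t0 * (\<epsilon> * \<epsilon>) \<le> dev t0 * \<epsilon>"
      using e dev_pos_t0[of t0] by (intro mult_left_mono) (auto simp: mult_left_le)
    finally have "dev T \<le> dev t0 * \<epsilon> powr (1 / real m)" using e simple_zero by simp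
    moreover have "T \<le> (\<bar>t0\<bar> + 2 / (c1 * a)) * \<epsilon> powr (- a)"
    proof -
      have "\<epsilon> powr a \<le> 1" using e a by (intro powr_le1) auto
      then have "1 \<le> \<epsilon> powr (- a)" using e by (simp add: powr_minus one_le_inverse_iff)
      have "- a * ln \<epsilon> = ln (\<epsilon> powr (- a))" using e by simp
      also have "\<dots> \<le> \<epsilon> powr (- a) - 1" by (rule ln_le_minus_one) (use e in simp)
      finally have "- ln \<epsilon> \<le> \<epsilon> powr (- a) / a" using a by (simp add: field_simps)
      then have "2 / c1 * (- ln \<epsilon>) \<le> 2 / c1 * (\<epsilon> powr (- a) / a)"
        using c1_pos by (intro mult_left_mono) auto
      then have "T \<le> t0 + 2 / c1 * (\<epsilon> powr (- a) / a)" by (simp add: T_def)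
      also have "t0 \<le> \<bar>t0\<bar> * \<epsilon> powr (- a)"
        using \<open>1 \<le> \<epsilon> powr (- a)\<close> by (smt (verit) abs_ge_zero mult_le_cancel_left1)
      finally show ?thesis using c1_pos a by (simp add: field_simps)
    qed
    ultimately show ?case using T0 simple_zero by (intro exI[of _ T]) auto
  qed
  then show ?thesis by blast
qed

lemma has_box_dim_spiral_exp: "has_box_dim spiral (2 - 1 / real m)"
  by (intro has_box_dim_spiralI dev_threshold_exp)

end

section \<open>Trajectory tails of the polar system\<close>

lemma spiral_tail_at_top:
  fixes f G :: "real \<Rightarrow> real" and m :: nat
  assumes pos_radius: "\<rho>0 > 0" and orientation: "\<sigma> = 1 \<or> \<sigma> = -1" and order_pos: "m \<ge> 1"
    and f_cont: "\<And>x. x > 0 \<Longrightarrow> isCont f x"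
    and local_bounds: "\<delta> > 0" "kl > 0" "sD = 1 \<or> sD = -1"
      "\<And>x. \<bar>x - \<rho>0\<bar> \<le> \<delta> \<Longrightarrow> \<exists>\<kappa>. f x = \<kappa> * (x - \<rho>0) ^ m \<and> kl \<le> sD * \<kappa> \<and> sD * \<kappa> \<le> ku"
      "\<And>x. \<bar>x - \<rho>0\<bar> \<le> \<delta> \<Longrightarrow> \<bar>f x - Dd * (x - \<rho>0)\<bar> \<le> M * (x - \<rho>0)\<^sup>2"
    and G: "\<And>t. t \<ge> t1 \<Longrightarrow> G t > 0 \<and> G t \<noteq> \<rho>0"
      "\<And>t. t \<ge> t1 \<Longrightarrow> (G has_real_derivative \<sigma> * (- G t * f (G t))) (at t within {t1..})"
      "(G \<longlongrightarrow> \<rho>0) at_top"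
  shows "m = 1 \<Longrightarrow> comparable G \<rho>0 (\<lambda>\<phi>. exp (- (\<sigma> * (\<rho>0 * Dd)) * \<phi>)) at_top"
    and "m > 1 \<Longrightarrow> comparable G \<rho>0 (\<lambda>\<phi>. \<bar>\<phi>\<bar> powr (- 1 / (real m - 1))) at_top"
    and "has_box_dim ((\<lambda>t. (G t * cos t, \<sigma> * (G t * sin t))) ` {t1..}) (2 - 1 / real m)"
proof -
  interpret spiral_tail f \<rho>0 t1 \<sigma> G m \<delta> kl ku sD
    using assms by unfold_locales auto
  obtain t0 c1 c2 where "t0 \<ge> t1" "c1 > 0" "c2 > 0" "\<And>t. t \<ge> t0 \<Longrightarrow> dev t \<le> \<delta> \<and> dev t \<le> \<rho>0 / 2 \<and>
      dev t \<le> 1 \<and> - c2 * dev t ^ m \<le> dev_deriv t \<and> dev_deriv t \<le> - c1 * dev t ^ m"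
    using dev_eventually_power_bounds by blast
  then interpret spiral_tail_decay f \<rho>0 t1 \<sigma> G m \<delta> kl ku sD t0 c1 c2
    by unfold_locales auto
  have spiral: "(\<lambda>t. (G t * cos t, \<sigma> * (G t * sin t))) ` {t1..} = spiral"
    by (simp add: spiral_def curve_def[abs_def])
  show "m > 1 \<Longrightarrow> comparable G \<rho>0 (\<lambda>\<phi>. \<bar>\<phi>\<bar> powr (- 1 / (real m - 1))) at_top"
    by (rule comparable_power_spiral)
  show "m = 1 \<Longrightarrow> comparable G \<rho>0 (\<lambda>\<phi>. exp (- (\<sigma> * (\<rho>0 * Dd)) * \<phi>)) at_top"
  proof -
    assume "m = 1"
    then interpret spiral_tail_simple f \<rho>0 t1 \<sigma> G m \<delta> kl ku sD t0 c1 c2 M Dd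
      using local_bounds(5) by unfold_locales auto
    show ?thesis by (rule comparable_exp_spiral)
  qed
  show "has_box_dim ((\<lambda>t. (G t * cos t, \<sigma> * (G t * sin t))) ` {t1..}) (2 - 1 / real m)"
  proof (cases "m = 1")
    case True
    then interpret spiral_tail_simple f \<rho>0 t1 \<sigma> G m \<delta> kl ku sD t0 c1 c2 M Dd
      using local_bounds(5) by unfold_locales auto
    show ?thesis unfolding spiral by (rule has_box_dim_spiral_exp)
  next
    case False
    then show ?thesis unfolding spiral using order_pos by (intro has_box_dim_spiral_power) simp
  qed
qed

lemma comparable_at_bot_iff_reflected:
  "comparable F \<rho>0 H at_bot \<longleftrightarrow> comparable (\<lambda>t. F (- t)) \<rho>0 (\<lambda>t. H (- t)) at_top"
proof -
  have "(\<forall>\<^sub>F \<phi> in at_bot. P \<phi>) \<longleftrightarrow> (\<forall>\<^sub>F t in at_top. P (- t))" for P :: "real \<Rightarrow> bool"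
    by (simp add: at_bot_mirror eventually_filtermap)
  then show ?thesis unfolding comparable_def by simp
qed

text \<open>A tail on \<open>{..\<phi>1}\<close> is turned into one on \<open>{- \<phi>1..}\<close> by the reflection \<open>t \<mapsto> - t\<close>, which
  reverses the orientation (\<open>\<sigma> = -1\<close>) and mirrors the spiral in the horizontal axis.\<close>

lemma reflected_tail:
  fixes F f :: "real \<Rightarrow> real"
  assumes F: "\<And>\<phi>. \<phi> \<le> \<phi>1 \<Longrightarrow> (F has_real_derivative - F \<phi> * f (F \<phi>)) (at \<phi> within {..\<phi>1})"
    and F_lim: "(F \<longlongrightarrow> \<rho>0) at_bot"
  shows "\<And>t. t \<ge> - \<phi>1 \<Longrightarrow>
      ((\<lambda>t. F (- t)) has_real_derivative - 1 * (- F (- t) * f (F (- t)))) (at t within {- \<phi>1..})"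
    and "((\<lambda>t. F (- t)) \<longlongrightarrow> \<rho>0) at_top"
    and "(\<lambda>t. (F (- t) * cos t, - 1 * (F (- t) * sin t))) ` {- \<phi>1..} = spiral_set F {..\<phi>1}"
proof -
  fix t :: real assume "t \<ge> - \<phi>1"
  then have "(F has_real_derivative - F (- t) * f (F (- t))) (at (- t) within uminus ` {- \<phi>1..})"
    using F[of "- t"] by simp
  from DERIV_image_chain[OF this DERIV_minus[OF DERIV_ident]]
  show "((\<lambda>t. F (- t)) has_real_derivative - 1 * (- F (- t) * f (F (- t)))) (at t within {- \<phi>1..})"
    by (simp add: o_def)
next
  show "((\<lambda>t. F (- t)) \<longlongrightarrow> \<rho>0) at_top"
    using filterlim_compose[OF F_lim filterlim_uminus_at_bot_at_top] by simp
next
  have eq: "{- \<phi>1..} = uminus ` {..\<phi>1::real}" by simp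
  have "(\<lambda>t. (F (- t) * cos t, - 1 * (F (- t) * sin t))) ` (uminus ` {..\<phi>1})
      = (\<lambda>\<phi>. (F \<phi> * cos \<phi>, F \<phi> * sin \<phi>)) ` {..\<phi>1}"
    unfolding image_image by simp
  then show "(\<lambda>t. (F (- t) * cos t, - 1 * (F (- t) * sin t))) ` {- \<phi>1..} = spiral_set F {..\<phi>1}"
    unfolding eq spiral_set_def .
qed

lemma traj_tail_properties:
  fixes l m :: nat and a :: "nat \<Rightarrow> real"
  defines "f \<equiv> cyc_fun l a"
  assumes pos_radius: "\<rho>0 > 0" and order_pos: "m \<ge> 1"
    and local_bounds: "\<delta> > 0" "kl > 0" "sD = 1 \<or> sD = -1"
      "\<And>x. \<bar>x - \<rho>0\<bar> \<le> \<delta> \<Longrightarrow> \<exists>\<kappa>. f x = \<kappa> * (x - \<rho>0) ^ m \<and> kl \<le> sD * \<kappa> \<and> sD * \<kappa> \<le> ku"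
      "\<And>x. \<bar>x - \<rho>0\<bar> \<le> \<delta> \<Longrightarrow> \<bar>f x - Dd * (x - \<rho>0)\<bar> \<le> M * (x - \<rho>0)\<^sup>2"
    and tail: "traj_tail l a \<rho>0 F T L"
  shows "m = 1 \<Longrightarrow> comparable F \<rho>0 (\<lambda>\<phi>. exp (- (\<rho>0 * Dd) * \<phi>)) L"
    and "m > 1 \<Longrightarrow> comparable F \<rho>0 (\<lambda>\<phi>. \<bar>\<phi>\<bar> powr (- 1 / (real m - 1))) L"
    and "has_box_dim (spiral_set F T) (2 - 1 / real m)"
proof -
  have "isCont f x" if "x > 0" for x
    using higher_deriv_cyc_fun_has_derivative[OF that, of 0 l a] DERIV_isCont by (simp add: f_def)
  note spiral_tail = spiral_tail_at_top[OF pos_radius _ order_pos this local_bounds]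
  obtain \<phi>1 where ends: "(T = {\<phi>1..} \<and> L = at_top) \<or> (T = {..\<phi>1} \<and> L = at_bot)"
    and F: "\<And>\<phi>. \<phi> \<in> T \<Longrightarrow> F \<phi> > 0 \<and> F \<phi> \<noteq> \<rho>0 \<and>
      (F has_real_derivative - F \<phi> * f (F \<phi>)) (at \<phi> within T)"
    and F_lim: "(F \<longlongrightarrow> \<rho>0) L"
    using tail unfolding traj_tail_def f_def by blast
  from ends consider "T = {\<phi>1..}" "L = at_top" | "T = {..\<phi>1}" "L = at_bot" by blast
  then have "(m = 1 \<longrightarrow> comparable F \<rho>0 (\<lambda>\<phi>. exp (- (\<rho>0 * Dd) * \<phi>)) L)
      \<and> (m > 1 \<longrightarrow> comparable F \<rho>0 (\<lambda>\<phi>. \<bar>\<phi>\<bar> powr (- 1 / (real m - 1))) L)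
      \<and> has_box_dim (spiral_set F T) (2 - 1 / real m)"
  proof cases
    case 1
    with F F_lim have "(m = 1 \<longrightarrow> comparable F \<rho>0 (\<lambda>\<phi>. exp (- (1 * (\<rho>0 * Dd)) * \<phi>)) at_top)
        \<and> (m > 1 \<longrightarrow> comparable F \<rho>0 (\<lambda>\<phi>. \<bar>\<phi>\<bar> powr (- 1 / (real m - 1))) at_top)
        \<and> has_box_dim ((\<lambda>t. (F t * cos t, 1 * (F t * sin t))) ` {\<phi>1..}) (2 - 1 / real m)"
      using spiral_tail[of 1 \<phi>1 F] by auto
    with 1 show ?thesis by (simp add: spiral_set_def)
  next
    case 2
    have pos: "F (- t) > 0 \<and> F (- t) \<noteq> \<rho>0" if "t \<ge> - \<phi>1" for t
      using F[of "- t"] that 2 by auto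
    have "(F has_real_derivative - F \<phi> * f (F \<phi>)) (at \<phi> within {..\<phi>1})" if "\<phi> \<le> \<phi>1" for \<phi>
      using F[of \<phi>] that 2 by auto
    note reflected = reflected_tail[OF this F_lim[unfolded 2(2)]]
    have "(m = 1 \<longrightarrow> comparable (\<lambda>t. F (- t)) \<rho>0 (\<lambda>\<phi>. exp (- (- 1 * (\<rho>0 * Dd)) * \<phi>)) at_top)
        \<and> (m > 1 \<longrightarrow> comparable (\<lambda>t. F (- t)) \<rho>0 (\<lambda>\<phi>. \<bar>\<phi>\<bar> powr (- 1 / (real m - 1))) at_top)
        \<and> has_box_dim ((\<lambda>t. (F (- t) * cos t, - 1 * (F (- t) * sin t))) ` {- \<phi>1..}) (2 - 1 / real m)"
      using spiral_tail[of "- 1" "- \<phi>1" "\<lambda>t. F (- t)"] pos reflected(1,2) by auto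
    then show ?thesis using reflected(3) 2 by (simp add: comparable_at_bot_iff_reflected)
  qed
  then show "m = 1 \<Longrightarrow> comparable F \<rho>0 (\<lambda>\<phi>. exp (- (\<rho>0 * Dd) * \<phi>)) L"
    and "m > 1 \<Longrightarrow> comparable F \<rho>0 (\<lambda>\<phi>. \<bar>\<phi>\<bar> powr (- 1 / (real m - 1))) L"
    and "has_box_dim (spiral_set F T) (2 - 1 / real m)" by blast+
qed

lemma cyc_fun_local_bounds:
  fixes l m :: nat and a :: "nat \<Rightarrow> real"
  defines "f \<equiv> cyc_fun l a"
  assumes pos_radius: "\<rho>0 > 0" and zero: "zero_multiplicity f \<rho>0 m" and order_pos: "m \<ge> 1"
  obtains \<delta> kl sD ku M where "\<delta> > 0" "kl > 0" "sD = 1 \<or> sD = -1"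
    "\<And>x. \<bar>x - \<rho>0\<bar> \<le> \<delta> \<Longrightarrow> \<exists>\<kappa>. f x = \<kappa> * (x - \<rho>0) ^ m \<and> kl \<le> sD * \<kappa> \<and> sD * \<kappa> \<le> ku"
    "\<And>x. \<bar>x - \<rho>0\<bar> \<le> \<delta> \<Longrightarrow> \<bar>f x - deriv f \<rho>0 * (x - \<rho>0)\<bar> \<le> M * (x - \<rho>0)\<^sup>2"
proof -
  define D where "D = (deriv ^^ m) f \<rho>0"
  have smooth: "\<And>k t. t > 0 \<Longrightarrow> ((deriv ^^ k) f has_real_derivative (deriv ^^ Suc k) f t) (at t)"
    unfolding f_def by (rule higher_deriv_cyc_fun_has_derivative)
  have vanish: "\<forall>k<m. (deriv ^^ k) f \<rho>0 = 0" and "D \<noteq> 0"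
    using zero by (simp_all add: zero_multiplicity_def D_def)
  obtain \<delta>1 where \<delta>1: "\<delta>1 > 0" "\<And>x. \<bar>x - \<rho>0\<bar> \<le> \<delta>1 \<Longrightarrow> \<exists>\<kappa>. f x = \<kappa> * (x - \<rho>0) ^ m \<and>
      \<bar>D\<bar> / (2 * fact m) \<le> sgn D * \<kappa> \<and> sgn D * \<kappa> \<le> 3 * \<bar>D\<bar> / (2 * fact m)"
    using zero_of_order_factor[OF smooth vanish _ _ pos_radius] order_pos \<open>D \<noteq> 0\<close> unfolding D_def by auto
  obtain \<delta>2 M where \<delta>2: "\<delta>2 > 0"
    "\<And>x. \<bar>x - \<rho>0\<bar> \<le> \<delta>2 \<Longrightarrow> \<bar>f x - deriv f \<rho>0 * (x - \<rho>0)\<bar> \<le> M * (x - \<rho>0)\<^sup>2"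
    using Taylor_second_order_bound[OF smooth pos_radius] vanish order_pos by force
  show ?thesis
  proof (rule that[of "min \<delta>1 \<delta>2" "\<bar>D\<bar> / (2 * fact m)" "sgn D"])
    show "min \<delta>1 \<delta>2 > 0" "\<bar>D\<bar> / (2 * fact m) > 0" "sgn D = 1 \<or> sgn D = -1"
      using \<delta>1(1) \<delta>2(1) \<open>D \<noteq> 0\<close> by (auto simp: sgn_if)
  qed (use \<delta>1(2) \<delta>2(2) in auto)
qed

theorem theorem4p2:
  fixes l m :: nat and a :: "nat \<Rightarrow> real" and \<rho>0 :: real
  assumes "l \<ge> 1" and "\<rho>0 > 0"
    and "zero_multiplicity (cyc_fun l a) \<rho>0 m"
    and "1 \<le> m" and "m \<le> l"
  shows "(m = 1 \<longrightarrow> (\<exists>\<beta>. \<beta> \<noteq> 0 \<and> (\<forall>F T L. traj_tail l a \<rho>0 F T L \<longrightarrow>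
              comparable F \<rho>0 (\<lambda>\<phi>. exp (- \<beta> * \<phi>)) L)))
       \<and> (m > 1 \<longrightarrow> (\<forall>F T L. traj_tail l a \<rho>0 F T L \<longrightarrow>
              comparable F \<rho>0 (\<lambda>\<phi>. \<bar>\<phi>\<bar> powr (- 1 / (real m - 1))) L))
       \<and> (\<forall>F T L. traj_tail l a \<rho>0 F T L \<longrightarrow>
              has_box_dim (spiral_set F T) (2 - 1 / real m))"
proof -
  obtain \<delta> kl sD ku M where bounds: "\<delta> > 0" "kl > 0" "sD = 1 \<or> sD = -1"
    "\<And>x. \<bar>x - \<rho>0\<bar> \<le> \<delta> \<Longrightarrow> \<exists>\<kappa>. cyc_fun l a x = \<kappa> * (x - \<rho>0) ^ m \<and> kl \<le> sD * \<kappa> \<and> sD * \<kappa> \<le> ku"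
    "\<And>x. \<bar>x - \<rho>0\<bar> \<le> \<delta> \<Longrightarrow>
      \<bar>cyc_fun l a x - deriv (cyc_fun l a) \<rho>0 * (x - \<rho>0)\<bar> \<le> M * (x - \<rho>0)\<^sup>2"
    using cyc_fun_local_bounds[OF assms(2,3,4)] by metis
  note tail = traj_tail_properties[OF assms(2,4) bounds]
  have "m = 1 \<Longrightarrow> \<rho>0 * deriv (cyc_fun l a) \<rho>0 \<noteq> 0"
    using assms(2,3) by (auto simp: zero_multiplicity_def)
  then show ?thesis
    using tail(1) by (intro conjI impI allI exI[of _ "\<rho>0 * deriv (cyc_fun l a) \<rho>0"] tail(2,3)) auto
qed

end
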